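(* Let $\mathcal W$ be a discrete memoryless channel from a finite set $\mathcal X$ to a finite set $\mathcal Y$. For every fixed integer $M\ge2$, $$\liminf_{n\to\infty}-\frac1n\log\epsilon^{\rm NS}(M,\mathcal W^{\times n})=U(\mathcal W).$$
   Context: For probability distributions $P,Q$ on a finite set, $D(P\|Q)=\sum_x P(x)\log\frac{P(x)}{Q(x)}$ (with $0\log(0/q)=0$, and $+\infty$ if $P\not\ll Q$). A discrete memoryless channel $\mathcal W$ from $\mathcal X$ to $\mathcal Y$ is a stochastic matrix $(\mathcal W(y|x))$; $\mathcal W^{\times n}(y^n|x^n)=\prod_{i}\mathcal W(y_i|x_i)$. The channel umlaut information is $U(\mathcal W)=\max_{P_X\in\mathcal P(\mathcal X)}\min_{Q_Y\in\mathcal P(\mathcal Y)}D(P_X\times Q_Y\|P_{XY})$ with $P_{XY}(x,y)=P_X(x)\mathcal W(y|x)$. An NS code for message set $[M]$ and channel $\mathcal W$ is a conditional distribution $\mathcal Z(x,\hat w\mid y,w)$ ($x\in\mathcal X$, $\hat w,w\in[M]$, $y\in\mathcal Y$) such that $\sum_x\mathcal Z(x,\hat w\mid y,w)$ does not depend on $w$ and $\sum_{\hat w}\mathcal Z(x,\hat w\mid y,w)$ does not depend on $y$. Its error probability (uniform messages) is $1-\frac1M\sum_{w}\sum_{x,y}\mathcal W(y|x)\mathcal Z(x,w\mid y,w)$; $\epsilon^{\rm NS}(M,\mathcal W)$ is the minimum over NS codes. *)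

theory Defs
  imports Complex_Main "HOL-Library.Extended_Real" "HOL-Library.Liminf_Limsup"
begin

definition is_distr :: "('a::finite \<Rightarrow> real) \<Rightarrow> bool" where
  "is_distr P \<longleftrightarrow> (\<forall>a. 0 \<le> P a) \<and> (\<Sum>a\<in>UNIV. P a) = 1"

text \<open>Relative entropy (natural logarithm), with value +infinity if P is not
  absolutely continuous w.r.t. Q, and the convention 0 log(0/q) = 0.\<close>
definition KL_div :: "('a::finite \<Rightarrow> real) \<Rightarrow> ('a \<Rightarrow> real) \<Rightarrow> ereal" where
  "KL_div P Q = (if \<exists>a. P a > 0 \<and> Q a = 0 then \<infinity>
                 else ereal (\<Sum>a\<in>{a. P a > 0}. P a * ln (P a / Q a)))"

text \<open>A DMC from 'x to 'y: W x y = W(y|x).\<close>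
definition is_channel :: "('x::finite \<Rightarrow> 'y::finite \<Rightarrow> real) \<Rightarrow> bool" where
  "is_channel W \<longleftrightarrow> (\<forall>x. is_distr (W x))"

definition umlaut_info :: "('x::finite \<Rightarrow> 'y::finite \<Rightarrow> real) \<Rightarrow> ereal" where
  "umlaut_info W =
     (SUP P\<in>{P. is_distr P}. INF Q\<in>{Q. is_distr Q}.
        KL_div (\<lambda>(x, y). P x * Q y) (\<lambda>(x, y). P x * W x y))"

definition words :: "nat \<Rightarrow> 'a list set" where
  "words n = {xs. length xs = n}"

definition channel_pow :: "nat \<Rightarrow> ('x \<Rightarrow> 'y \<Rightarrow> real) \<Rightarrow> 'x list \<Rightarrow> 'y list \<Rightarrow> real" where
  "channel_pow n W xs ys = (\<Prod>i<n. W (xs ! i) (ys ! i))"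

text \<open>NS codes for message set [M] = {0..<M}, channel with input set A and output set B.
  Z x v y w = Z(x, \<hat>w = v | y, w).\<close>
definition is_NS_code ::
  "nat \<Rightarrow> 'a set \<Rightarrow> 'b set \<Rightarrow> ('a \<Rightarrow> nat \<Rightarrow> 'b \<Rightarrow> nat \<Rightarrow> real) \<Rightarrow> bool" where
  "is_NS_code M A B Z \<longleftrightarrow>
     (\<forall>x\<in>A. \<forall>v<M. \<forall>y\<in>B. \<forall>w<M. 0 \<le> Z x v y w) \<and>
     (\<forall>y\<in>B. \<forall>w<M. (\<Sum>x\<in>A. \<Sum>v<M. Z x v y w) = 1) \<and>
     (\<forall>v<M. \<forall>y\<in>B. \<forall>w<M. \<forall>w'<M. (\<Sum>x\<in>A. Z x v y w) = (\<Sum>x\<in>A. Z x v y w')) \<and>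
     (\<forall>x\<in>A. \<forall>w<M. \<forall>y\<in>B. \<forall>y'\<in>B. (\<Sum>v<M. Z x v y w) = (\<Sum>v<M. Z x v y' w))"

definition NS_error ::
  "nat \<Rightarrow> 'a set \<Rightarrow> 'b set \<Rightarrow> ('a \<Rightarrow> 'b \<Rightarrow> real) \<Rightarrow> ('a \<Rightarrow> nat \<Rightarrow> 'b \<Rightarrow> nat \<Rightarrow> real) \<Rightarrow> real" where
  "NS_error M A B W Z =
     1 - (1 / real M) * (\<Sum>w<M. \<Sum>x\<in>A. \<Sum>y\<in>B. W x y * Z x w y w)"

definition eps_NS :: "nat \<Rightarrow> 'a set \<Rightarrow> 'b set \<Rightarrow> ('a \<Rightarrow> 'b \<Rightarrow> real) \<Rightarrow> real" where
  "eps_NS M A B W = Inf {NS_error M A B W Z | Z. is_NS_code M A B Z}"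

definition neg_log_rate :: "nat \<Rightarrow> real \<Rightarrow> ereal" where
  "neg_log_rate n e = (if e \<le> 0 then \<infinity> else ereal (- ln e / real n))"

end

theory Submission
  imports Defs "HOL-Analysis.Analysis"
begin

text \<open>
  As far as its error is concerned, an NS code is a pair \<open>(P, T)\<close>: an input distribution \<open>P\<close>
  and weights \<open>0 \<le> T x y \<le> P x\<close> with all column sums \<open>1 - 1/M\<close>, the error being
  \<open>\<Sum>\<^sub>x \<Sum>\<^sub>y W(y|x) T(x, y)\<close>. This is a hypothesis test in disguise.

  Achievability: for i.i.d. inputs \<open>P\<^sup>n\<close>, let \<open>T\<close> keep only the inputs whose likelihood stays below
  \<open>\<tau>(y\<^sup>n) = exp (n \<delta> + \<Sum>\<^sub>i \<mu>(y\<^sub>i))\<close>, with \<open>\<mu>\<close> the mean (clipped) log-likelihood. By the weak law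
  of large numbers the threshold is exceeded with probability at most \<open>1/M\<close>, so the error is
  at most \<open>\<Sum> \<tau> = exp (n \<delta>) (\<Sum>\<^sub>y exp \<mu>(y))\<^sup>n\<close>, and \<open>exp \<mu>\<close> is the \<open>P\<close>-weighted geometric mean of the rows
  of \<open>W\<close> up to the clipping.

  Converse: by the Gibbs variational principle
  \<open>U(W) = max\<^sub>P - ln \<Sum>\<^sub>y exp (\<Sum>\<^sub>x P x ln W(y|x))\<close>. The normalised geometric mean at a maximiser is an
  output distribution \<open>Q\<close> with \<open>D(Q \<parallel> W(\<cdot>|x)) \<le> U(W)\<close> for every \<open>x\<close> (first-order conditions against
  point masses); weighting the column-sum constraint by \<open>Q\<^sup>n\<close> and using the weak law again shows
  that every code has error at least \<open>exp (- n (U(W) + \<delta>)) (1 - 1/M) / 2\<close>.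
\<close>

section \<open>Words, channels and i.i.d. products\<close>

lemma words_0: "words 0 = {[]}"
  unfolding words_def by auto

lemma words_Suc: "words (Suc n) = (\<lambda>(a, xs). a # xs) ` (UNIV \<times> words n)"
  unfolding words_def by (auto simp: image_iff length_Suc_conv)

lemma finite_words [simp]: "finite (words n :: 'a::finite list set)"
proof -
  have "words n = {xs::'a list. set xs \<subseteq> UNIV \<and> length xs = n}"
    unfolding words_def by auto
  then show ?thesis
    using finite_lists_length_eq[of "UNIV::'a set" n] by simp
qed

lemma words_not_empty: "words n \<noteq> {}"
  unfolding words_def by (auto intro!: exI[of _ "replicate n undefined"])

lemma sum_words_Suc:
  fixes G :: "'a::finite list \<Rightarrow> 'b::comm_monoid_add"
  shows "(\<Sum>zs\<in>words (Suc n). G zs) = (\<Sum>a\<in>UNIV. \<Sum>xs\<in>words n. G (a # xs))"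
proof -
  have inj: "inj_on (\<lambda>(a, xs). a # xs) (UNIV \<times> words n)"
    by (auto simp: inj_on_def)
  have "(\<Sum>zs\<in>words (Suc n). G zs) = (\<Sum>p\<in>UNIV \<times> words n. G ((\<lambda>(a, xs). a # xs) p))"
    unfolding words_Suc by (rule sum.reindex[OF inj, unfolded comp_def])
  also have "\<dots> = (\<Sum>a\<in>UNIV. \<Sum>xs\<in>words n. G (a # xs))"
    unfolding sum.cartesian_product by (simp add: case_prod_unfold)
  finally show ?thesis .
qed

lemma sum_words_prod:
  fixes f :: "nat \<Rightarrow> 'a::finite \<Rightarrow> real"
  shows "(\<Sum>xs\<in>words n. \<Prod>i<n. f i (xs ! i)) = (\<Prod>i<n. \<Sum>a\<in>UNIV. f i a)"
proof (induction n arbitrary: f)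
  case 0
  then show ?case by (simp add: words_0)
next
  case (Suc n)
  have "(\<Sum>xs\<in>words (Suc n). \<Prod>i<Suc n. f i (xs ! i))
      = (\<Sum>a\<in>UNIV. \<Sum>xs\<in>words n. f 0 a * (\<Prod>i<n. f (Suc i) (xs ! i)))"
    unfolding sum_words_Suc by (simp del: prod.lessThan_Suc add: prod.lessThan_Suc_shift)
  also have "\<dots> = (\<Sum>a\<in>UNIV. f 0 a * (\<Prod>i<n. \<Sum>b\<in>UNIV. f (Suc i) b))"
    using Suc.IH[where f = "\<lambda>i. f (Suc i)"] by (simp add: sum_distrib_left[symmetric])
  also have "\<dots> = (\<Prod>i<Suc n. \<Sum>a\<in>UNIV. f i a)"
    by (simp del: prod.lessThan_Suc add: prod.lessThan_Suc_shift sum_distrib_right)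
  finally show ?case .
qed

lemma channel_nonneg: "is_channel W \<Longrightarrow> 0 \<le> W x y"
  unfolding is_channel_def is_distr_def by blast

lemma channel_sum: "is_channel W \<Longrightarrow> (\<Sum>y\<in>UNIV. W x y) = 1"
  unfolding is_channel_def is_distr_def by blast

lemma channel_le_1:
  assumes "is_channel W"
  shows "W x y \<le> 1"
proof -
  have "W x y \<le> (\<Sum>y'\<in>UNIV. W x y')"
    by (rule member_le_sum) (auto intro: channel_nonneg[OF assms])
  then show ?thesis
    using channel_sum[OF assms] by simp
qed

lemma channel_pow_nonneg: "is_channel W \<Longrightarrow> 0 \<le> channel_pow n W xs ys"
  unfolding channel_pow_def by (auto intro: prod_nonneg dest: channel_nonneg)

lemma channel_pow_sum:
  fixes W :: "'x::finite \<Rightarrow> 'y::finite \<Rightarrow> real"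
  assumes "is_channel W"
  shows "(\<Sum>ys\<in>words n. channel_pow n W xs ys) = 1"
  unfolding channel_pow_def
  using sum_words_prod[where n = n and f = "\<lambda>i b. W (xs ! i) b"] channel_sum[OF assms] by simp

lemma is_distr_ex_pos:
  assumes "is_distr P"
  obtains x where "0 < P x"
proof -
  have "\<exists>x. 0 < P x"
  proof (rule ccontr)
    assume "\<nexists>x. 0 < P x"
    then have "\<And>x. P x = 0"
      using assms unfolding is_distr_def by (metis less_eq_real_def)
    then show False
      using assms unfolding is_distr_def by simp
  qed
  then show ?thesis
    using that by blast
qed

definition iid :: "('a \<Rightarrow> real) \<Rightarrow> nat \<Rightarrow> 'a list \<Rightarrow> real" where
  "iid p n xs = (\<Prod>i<n. p (xs ! i))"

lemma iid_Cons: "iid p (Suc n) (a # xs) = p a * iid p n xs"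
  unfolding iid_def by (simp del: prod.lessThan_Suc add: prod.lessThan_Suc_shift)

lemma iid_nonneg: "(\<And>a. 0 \<le> p a) \<Longrightarrow> 0 \<le> iid p n xs"
  unfolding iid_def by (simp add: prod_nonneg)

lemma iid_pos_iff:
  assumes "\<And>a. 0 \<le> p a"
  shows "0 < iid p n xs \<longleftrightarrow> (\<forall>i<n. 0 < p (xs ! i))"
proof
  assume "0 < iid p n xs"
  then have "iid p n xs \<noteq> 0" by simp
  then have "\<forall>i<n. p (xs ! i) \<noteq> 0"
    unfolding iid_def by (simp add: prod_zero_iff)
  then show "\<forall>i<n. 0 < p (xs ! i)"
    using assms by (simp add: less_le)
qed (auto simp: iid_def intro: prod_pos)

lemma sum_iid:
  fixes p :: "'a::finite \<Rightarrow> real"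
  assumes "sum p UNIV = 1"
  shows "(\<Sum>xs\<in>words n. iid p n xs) = 1"
  unfolding iid_def using sum_words_prod[where n = n and f = "\<lambda>i. p"] assms by simp

lemma sum_iid_factor:
  fixes p q :: "'a::finite \<Rightarrow> real"
  assumes i: "i < n"
  shows "(\<Sum>xs\<in>words n. iid p n xs * q (xs ! i))
       = (\<Sum>a\<in>UNIV. p a * q a) * (\<Sum>a\<in>UNIV. p a) ^ (n - 1)"
proof -
  define f where "f j a = (if j = i then p a * q a else p a)" for j a
  have split: "(\<Prod>j<n. g j) = g i * (\<Prod>j\<in>{..<n} - {i}. g j)" for g :: "nat \<Rightarrow> real"
    using prod.remove[of "{..<n}" i g] i by simp
  have factor: "(\<Prod>j<n. f j (xs ! j)) = iid p n xs * q (xs ! i)" for xs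
  proof -
    have "(\<Prod>j\<in>{..<n} - {i}. f j (xs ! j)) = (\<Prod>j\<in>{..<n} - {i}. p (xs ! j))"
      by (rule prod.cong) (auto simp: f_def)
    then show ?thesis
      unfolding iid_def split[of "\<lambda>j. f j (xs ! j)"] split[of "\<lambda>j. p (xs ! j)"]
      by (simp add: f_def)
  qed
  have "(\<Sum>xs\<in>words n. iid p n xs * q (xs ! i)) = (\<Sum>xs\<in>words n. \<Prod>j<n. f j (xs ! j))"
    by (simp add: factor)
  also have "\<dots> = (\<Prod>j<n. \<Sum>a\<in>UNIV. f j a)"
    by (rule sum_words_prod)
  also have "\<dots> = (\<Sum>a\<in>UNIV. p a * q a) * (\<Sum>a\<in>UNIV. p a) ^ (n - 1)"
    unfolding split[of "\<lambda>j. \<Sum>a\<in>UNIV. f j a"] using i by (simp add: f_def card_Diff_singleton)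
  finally show ?thesis .
qed

lemma iid_second_moment_sum:
  fixes p :: "'a::finite \<Rightarrow> real" and d :: "nat \<Rightarrow> 'a \<Rightarrow> real"
  assumes p: "sum p UNIV = 1" and centred: "\<And>i. (\<Sum>a\<in>UNIV. p a * d i a) = 0"
  shows "(\<Sum>xs\<in>words n. iid p n xs * (\<Sum>i<n. d i (xs ! i))\<^sup>2)
       = (\<Sum>i<n. \<Sum>a\<in>UNIV. p a * (d i a)\<^sup>2)"
  using centred
proof (induction n arbitrary: d)
  case 0
  then show ?case by (simp add: words_0 iid_def)
next
  case (Suc n)
  define D where "D xs = (\<Sum>i<n. d (Suc i) (xs ! i))" for xs
  have IH: "(\<Sum>xs\<in>words n. iid p n xs * (D xs)\<^sup>2) = (\<Sum>i<n. \<Sum>a\<in>UNIV. p a * (d (Suc i) a)\<^sup>2)"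
    unfolding D_def by (rule Suc.IH) (rule Suc.prems)
  have "(\<Sum>xs\<in>words n. iid p n xs * D xs)
      = (\<Sum>i<n. \<Sum>xs\<in>words n. iid p n xs * d (Suc i) (xs ! i))"
    unfolding D_def by (simp add: sum_distrib_left sum.swap[of _ "words n"])
  also have "\<dots> = 0"
  proof (rule sum.neutral, rule ballI)
    fix i assume "i \<in> {..<n}"
    then show "(\<Sum>xs\<in>words n. iid p n xs * d (Suc i) (xs ! i)) = 0"
      using sum_iid_factor[of i n p "d (Suc i)"] Suc.prems[of "Suc i"] by simp
  qed
  finally have mean: "(\<Sum>xs\<in>words n. iid p n xs * D xs) = 0" .
  have "(\<Sum>xs\<in>words (Suc n). iid p (Suc n) xs * (\<Sum>i<Suc n. d i (xs ! i))\<^sup>2)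
      = (\<Sum>a\<in>UNIV. \<Sum>xs\<in>words n. p a * iid p n xs * (d 0 a + D xs)\<^sup>2)"
    unfolding sum_words_Suc D_def
    by (simp del: sum.lessThan_Suc add: iid_Cons sum.lessThan_Suc_shift mult.assoc)
  also have "\<dots> = (\<Sum>a\<in>UNIV. p a * (d 0 a)\<^sup>2 * (\<Sum>xs\<in>words n. iid p n xs)
                 + 2 * (p a * d 0 a) * (\<Sum>xs\<in>words n. iid p n xs * D xs)
                 + p a * (\<Sum>xs\<in>words n. iid p n xs * (D xs)\<^sup>2))"
    by (simp add: power2_eq_square algebra_simps sum.distrib sum_distrib_left)
  also have "\<dots> = (\<Sum>i<Suc n. \<Sum>a\<in>UNIV. p a * (d i a)\<^sup>2)"
    by (simp del: sum.lessThan_Suc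
        add: mean sum_iid[OF p] sum.distrib sum_distrib_right[symmetric] p IH sum.lessThan_Suc_shift)
  finally show ?case .
qed

lemma chebyshev_sum:
  fixes q D :: "'a \<Rightarrow> real"
  assumes "\<And>x. x \<in> A \<Longrightarrow> 0 \<le> q x" and "0 < t"
  shows "(\<Sum>x\<in>A. if t \<le> D x then q x else 0) \<le> (\<Sum>x\<in>A. q x * (D x)\<^sup>2) / t\<^sup>2"
proof -
  have "(\<Sum>x\<in>A. if t \<le> D x then q x else 0) \<le> (\<Sum>x\<in>A. q x * (D x)\<^sup>2 / t\<^sup>2)"
  proof (rule sum_mono)
    fix x assume x: "x \<in> A"
    show "(if t \<le> D x then q x else 0) \<le> q x * (D x)\<^sup>2 / t\<^sup>2"
    proof (cases "t \<le> D x")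
      case True
      then have "1 \<le> (D x)\<^sup>2 / t\<^sup>2"
        using assms(2) by (simp add: power_mono)
      then show ?thesis
        using True assms(1)[OF x] mult_left_mono[of 1 "(D x)\<^sup>2 / t\<^sup>2" "q x"] by simp
    qed (use assms(1)[OF x] in simp)
  qed
  also have "\<dots> = (\<Sum>x\<in>A. q x * (D x)\<^sup>2) / t\<^sup>2"
    by (simp add: sum_divide_distrib)
  finally show ?thesis .
qed

lemma iid_tail_bound:
  fixes p :: "'a::finite \<Rightarrow> real" and d :: "nat \<Rightarrow> 'a \<Rightarrow> real"
  assumes p: "is_distr p" and centred: "\<And>i. (\<Sum>a\<in>UNIV. p a * d i a) = 0"
    and var: "\<And>i. (\<Sum>a\<in>UNIV. p a * (d i a)\<^sup>2) \<le> V" and n: "0 < n" and \<delta>: "0 < \<delta>"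
  shows "(\<Sum>xs\<in>words n. if real n * \<delta> \<le> (\<Sum>i<n. d i (xs ! i)) then iid p n xs else 0)
       \<le> V / (real n * \<delta>\<^sup>2)"
proof -
  have p0: "\<And>a. 0 \<le> p a" and p1: "sum p UNIV = 1"
    using p unfolding is_distr_def by auto
  have "(\<Sum>xs\<in>words n. if real n * \<delta> \<le> (\<Sum>i<n. d i (xs ! i)) then iid p n xs else 0)
      \<le> (\<Sum>xs\<in>words n. iid p n xs * (\<Sum>i<n. d i (xs ! i))\<^sup>2) / (real n * \<delta>)\<^sup>2"
    using n \<delta> by (intro chebyshev_sum iid_nonneg p0) simp
  also have "\<dots> = (\<Sum>i<n. \<Sum>a\<in>UNIV. p a * (d i a)\<^sup>2) / (real n * \<delta>)\<^sup>2"
    by (simp add: iid_second_moment_sum[OF p1 centred])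
  also have "\<dots> \<le> real n * V / (real n * \<delta>)\<^sup>2"
    using sum_mono[of "{..<n}", OF var] by (simp add: divide_right_mono)
  also have "\<dots> = V / (real n * \<delta>\<^sup>2)"
    using n by (simp add: power2_eq_square)
  finally show ?thesis .
qed

section \<open>NS codes as tests\<close>

text \<open>The pair \<open>(P, T)\<close> of a code \<open>Z\<close>: \<open>P x = Z(x | w)\<close> is its input marginal and
  \<open>T x y = P x - (1/M) \<Sum>\<^sub>w Z(x, w | y, w)\<close> the weight of input \<open>x\<close> jointly with a decoding error
  at output \<open>y\<close>.\<close>

definition NS_test :: "nat \<Rightarrow> 'a set \<Rightarrow> 'b set \<Rightarrow> ('a \<Rightarrow> real) \<Rightarrow> ('a \<Rightarrow> 'b \<Rightarrow> real) \<Rightarrow> bool" where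
  "NS_test M A B P T \<longleftrightarrow> (\<forall>x\<in>A. 0 \<le> P x) \<and> sum P A = 1 \<and>
     (\<forall>x\<in>A. \<forall>y\<in>B. 0 \<le> T x y \<and> T x y \<le> P x) \<and> (\<forall>y\<in>B. (\<Sum>x\<in>A. T x y) = 1 - 1 / real M)"

lemma sum_lessThan_if_eq:
  fixes a b :: real
  assumes "w < M"
  shows "(\<Sum>v<M. if v = w then a else b) = a + (real M - 1) * b"
proof -
  have "(\<Sum>v<M. if v = w then a else b) = (\<Sum>v<M. b + (if v = w then a - b else 0))"
    by (rule sum.cong) auto
  also have "\<dots> = real M * b + (a - b)"
    using assms by (simp add: sum.distrib)
  finally show ?thesis by (simp add: algebra_simps)
qed

lemma NS_code_of_test:
  fixes W :: "'a \<Rightarrow> 'b \<Rightarrow> real"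
  assumes M: "2 \<le> M" and test: "NS_test M A B P T"
    and W1: "\<And>x. x \<in> A \<Longrightarrow> (\<Sum>y\<in>B. W x y) = 1"
  shows "\<exists>Z. is_NS_code M A B Z \<and> NS_error M A B W Z = (\<Sum>x\<in>A. \<Sum>y\<in>B. W x y * T x y)"
proof -
  have P1: "sum P A = 1" and T: "\<And>x y. x \<in> A \<Longrightarrow> y \<in> B \<Longrightarrow> 0 \<le> T x y \<and> T x y \<le> P x"
    and Tsum: "\<And>y. y \<in> B \<Longrightarrow> (\<Sum>x\<in>A. T x y) = 1 - 1 / real M"
    using test unfolding NS_test_def by auto
  define Z where "Z x (v::nat) y (w::nat) = (if v = w then P x - T x y else T x y / (real M - 1))" for x v y w
  have M1: "0 < real M - 1"
    using M by simp
  have sum_v: "(\<Sum>v<M. Z x v y w) = P x" if "w < M" for x y w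
    unfolding Z_def using sum_lessThan_if_eq[OF that, of "P x - T x y" "T x y / (real M - 1)"] M1 by simp
  have sum_x: "(\<Sum>x\<in>A. Z x v y w) = 1 / real M" if "y \<in> B" for v y w
  proof (cases "v = w")
    case True
    then show ?thesis
      unfolding Z_def using Tsum[OF that] P1 by (simp add: sum_subtractf)
  next
    case False
    then have "(\<Sum>x\<in>A. Z x v y w) = (1 - 1 / real M) / (real M - 1)"
      unfolding Z_def using Tsum[OF that] by (simp add: sum_divide_distrib[symmetric])
    also have "\<dots> = 1 / real M"
      using M1 M by (simp add: field_simps)
    finally show ?thesis .
  qed
  have code: "is_NS_code M A B Z"
    unfolding is_NS_code_def
  proof (intro conjI ballI allI impI)
    fix x v y w assume "x \<in> A" "y \<in> B"
    then show "0 \<le> Z x v y w"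
      unfolding Z_def using T[of x y] M1 by auto
  next
    fix y w assume "y \<in> B" "w < M"
    then show "(\<Sum>x\<in>A. \<Sum>v<M. Z x v y w) = 1"
      using sum_v P1 by simp
  qed (simp_all add: sum_x sum_v)
  have "(\<Sum>w<M. \<Sum>x\<in>A. \<Sum>y\<in>B. W x y * Z x w y w)
      = real M * ((\<Sum>x\<in>A. P x * (\<Sum>y\<in>B. W x y)) - (\<Sum>x\<in>A. \<Sum>y\<in>B. W x y * T x y))"
    unfolding Z_def by (simp add: algebra_simps sum_subtractf sum_distrib_left)
  also have "(\<Sum>x\<in>A. P x * (\<Sum>y\<in>B. W x y)) = 1"
    using W1 P1 by simp
  finally have "NS_error M A B W Z = (\<Sum>x\<in>A. \<Sum>y\<in>B. W x y * T x y)"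
    unfolding NS_error_def using M by simp
  with code show ?thesis by blast
qed

lemma NS_error_eq_diag:
  "NS_error M A B W Z = 1 - (\<Sum>x\<in>A. \<Sum>y\<in>B. W x y * (\<Sum>w<M. Z x w y w)) / real M"
proof -
  have "(\<Sum>w<M. \<Sum>x\<in>A. \<Sum>y\<in>B. W x y * Z x w y w) = (\<Sum>x\<in>A. \<Sum>w<M. \<Sum>y\<in>B. W x y * Z x w y w)"
    by (rule sum.swap)
  also have "\<dots> = (\<Sum>x\<in>A. \<Sum>y\<in>B. \<Sum>w<M. W x y * Z x w y w)"
    by (rule sum.cong[OF refl], rule sum.swap)
  finally show ?thesis
    unfolding NS_error_def by (simp add: sum_distrib_left sum_divide_distrib)
qed

text \<open>No signalling from the message to the output: the probability of decoding correctly at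
  output \<open>y\<close> does not depend on the message, and summed over all messages it is \<open>1\<close>.\<close>

lemma NS_code_sum_diag:
  assumes Z: "is_NS_code M A B Z" and M: "1 \<le> M" and y: "y \<in> B"
  shows "(\<Sum>x\<in>A. \<Sum>w<M. Z x w y w) = 1"
proof -
  have "0 < M"
    using M by simp
  then have diag: "(\<Sum>x\<in>A. Z x w y w) = (\<Sum>x\<in>A. Z x w y 0)" if "w < M" for w
    using Z y that unfolding is_NS_code_def by blast
  have "(\<Sum>x\<in>A. \<Sum>w<M. Z x w y w) = (\<Sum>w<M. \<Sum>x\<in>A. Z x w y w)"
    by (rule sum.swap)
  also have "\<dots> = (\<Sum>w<M. \<Sum>x\<in>A. Z x w y 0)"
    by (rule sum.cong[OF refl], rule diag) simp
  also have "\<dots> = (\<Sum>x\<in>A. \<Sum>w<M. Z x w y 0)"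
    by (rule sum.swap)
  also have "\<dots> = 1"
    using Z y \<open>0 < M\<close> unfolding is_NS_code_def by blast
  finally show ?thesis .
qed

lemma NS_test_of_code:
  fixes W :: "'a \<Rightarrow> 'b \<Rightarrow> real"
  assumes M: "1 \<le> M" and y0: "y0 \<in> B" and Z: "is_NS_code M A B Z"
    and W1: "\<And>x. x \<in> A \<Longrightarrow> (\<Sum>y\<in>B. W x y) = 1"
  shows "\<exists>P T. NS_test M A B P T \<and> NS_error M A B W Z = (\<Sum>x\<in>A. \<Sum>y\<in>B. W x y * T x y)"
proof -
  have Z0: "0 \<le> Z x v y w" if "x \<in> A" "v < M" "y \<in> B" "w < M" for x v y w
    using Z that unfolding is_NS_code_def by blast
  have Z1: "(\<Sum>x\<in>A. \<Sum>v<M. Z x v y w) = 1" if "y \<in> B" "w < M" for y w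
    using Z that unfolding is_NS_code_def by blast
  have no_signal: "(\<Sum>v<M. Z x v y w) = (\<Sum>v<M. Z x v y0 w)" if "x \<in> A" "w < M" "y \<in> B" for x w y
    using Z that y0 unfolding is_NS_code_def by blast
  define P where "P x = (\<Sum>w<M. \<Sum>v<M. Z x v y0 w) / real M" for x
  define T where "T x y = P x - (\<Sum>w<M. Z x w y w) / real M" for x y
  have Mpos: "0 < real M"
    using M by simp
  have P0: "\<forall>x\<in>A. 0 \<le> P x"
    unfolding P_def using Z0 y0 by (auto intro!: sum_nonneg divide_nonneg_nonneg)
  have "(\<Sum>x\<in>A. \<Sum>w<M. \<Sum>v<M. Z x v y0 w) = (\<Sum>w<M. \<Sum>x\<in>A. \<Sum>v<M. Z x v y0 w)"
    by (rule sum.swap)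
  then have P1: "sum P A = 1"
    using Z1[OF y0] Mpos unfolding P_def by (simp add: sum_divide_distrib[symmetric])
  have T: "\<forall>x\<in>A. \<forall>y\<in>B. 0 \<le> T x y \<and> T x y \<le> P x"
  proof (intro ballI conjI)
    fix x y assume x: "x \<in> A" and y: "y \<in> B"
    have "(\<Sum>w<M. Z x w y w) \<le> (\<Sum>w<M. \<Sum>v<M. Z x v y w)"
      using x y by (intro sum_mono member_le_sum) (auto intro: Z0)
    then show "0 \<le> T x y"
      unfolding T_def P_def using no_signal[OF x _ y] Mpos by (simp add: divide_right_mono)
    show "T x y \<le> P x"
      unfolding T_def using Z0 x y by (auto intro!: sum_nonneg divide_nonneg_nonneg)
  qed
  have Tsum: "\<forall>y\<in>B. (\<Sum>x\<in>A. T x y) = 1 - 1 / real M"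
    using NS_code_sum_diag[OF Z M] P1 unfolding T_def
    by (simp add: sum_subtractf sum_divide_distrib[symmetric])
  have "NS_error M A B W Z = (\<Sum>x\<in>A. P x * (\<Sum>y\<in>B. W x y))
      - (\<Sum>x\<in>A. \<Sum>y\<in>B. W x y * (\<Sum>w<M. Z x w y w)) / real M"
    unfolding NS_error_eq_diag using W1 P1 by simp
  also have "\<dots> = (\<Sum>x\<in>A. \<Sum>y\<in>B. W x y * T x y)"
    unfolding T_def by (simp add: algebra_simps sum_subtractf sum_distrib_left sum_divide_distrib)
  finally show ?thesis
    unfolding NS_test_def using P0 P1 T Tsum by blast
qed

lemma NS_test_uniform:
  assumes "finite A" "A \<noteq> {}" "1 \<le> M"
  shows "NS_test M A B (\<lambda>x. 1 / real (card A)) (\<lambda>x y. (1 - 1 / real M) / real (card A))"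
proof -
  have "0 < card A"
    using assms by (simp add: card_gt_0_iff)
  moreover have "1 / real M \<le> 1"
    using assms by simp
  ultimately show ?thesis
    unfolding NS_test_def by (auto simp: divide_right_mono)
qed

lemma NS_test_error_nonneg:
  assumes "NS_test M A B P T" and "\<And>x y. 0 \<le> W x y"
  shows "0 \<le> (\<Sum>x\<in>A. \<Sum>y\<in>B. W x y * T x y)"
  using assms unfolding NS_test_def by (intro sum_nonneg mult_nonneg_nonneg) auto

lemma eps_NS_le_test_error:
  fixes W :: "'a \<Rightarrow> 'b \<Rightarrow> real"
  assumes M: "2 \<le> M" and B: "B \<noteq> {}" and W0: "\<And>x y. 0 \<le> W x y"
    and W1: "\<And>x. x \<in> A \<Longrightarrow> (\<Sum>y\<in>B. W x y) = 1" and test: "NS_test M A B P T"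
  shows "eps_NS M A B W \<le> (\<Sum>x\<in>A. \<Sum>y\<in>B. W x y * T x y)"
proof -
  obtain y0 where y0: "y0 \<in> B"
    using B by blast
  obtain Z where "is_NS_code M A B Z" and "NS_error M A B W Z = (\<Sum>x\<in>A. \<Sum>y\<in>B. W x y * T x y)"
    using NS_code_of_test[OF M test] W1 by blast
  moreover have "bdd_below {NS_error M A B W Z | Z. is_NS_code M A B Z}"
  proof (rule bdd_belowI)
    fix e assume "e \<in> {NS_error M A B W Z | Z. is_NS_code M A B Z}"
    then obtain Z where "is_NS_code M A B Z" and e: "e = NS_error M A B W Z"
      by blast
    have "\<exists>P' T'. NS_test M A B P' T' \<and> NS_error M A B W Z = (\<Sum>x\<in>A. \<Sum>y\<in>B. W x y * T' x y)"
      using M by (intro NS_test_of_code[OF _ y0 \<open>is_NS_code M A B Z\<close>] W1) auto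
    then obtain P' T' where "NS_test M A B P' T'"
      and "NS_error M A B W Z = (\<Sum>x\<in>A. \<Sum>y\<in>B. W x y * T' x y)"
      by blast
    then show "0 \<le> e"
      unfolding e using NS_test_error_nonneg W0 by metis
  qed
  ultimately show ?thesis
    unfolding eps_NS_def by (metis (mono_tags, lifting) cInf_lower mem_Collect_eq)
qed

lemma test_error_le_eps_NS:
  fixes W :: "'a \<Rightarrow> 'b \<Rightarrow> real"
  assumes M: "2 \<le> M" and A: "finite A" "A \<noteq> {}" and B: "B \<noteq> {}"
    and W1: "\<And>x. x \<in> A \<Longrightarrow> (\<Sum>y\<in>B. W x y) = 1"
    and bound: "\<And>P T. NS_test M A B P T \<Longrightarrow> b \<le> (\<Sum>x\<in>A. \<Sum>y\<in>B. W x y * T x y)"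
  shows "b \<le> eps_NS M A B W"
  unfolding eps_NS_def
proof (rule cInf_greatest)
  show "{NS_error M A B W Z | Z. is_NS_code M A B Z} \<noteq> {}"
    using NS_code_of_test[OF M NS_test_uniform[OF A], where W = W] W1 M by auto
  obtain y0 where y0: "y0 \<in> B"
    using B by blast
  fix e assume "e \<in> {NS_error M A B W Z | Z. is_NS_code M A B Z}"
  then obtain Z where "is_NS_code M A B Z" and e: "e = NS_error M A B W Z"
    by blast
  have "\<exists>P T. NS_test M A B P T \<and> NS_error M A B W Z = (\<Sum>x\<in>A. \<Sum>y\<in>B. W x y * T x y)"
    using M by (intro NS_test_of_code[OF _ y0 \<open>is_NS_code M A B Z\<close>] W1) auto
  then obtain P T where "NS_test M A B P T"
    and "NS_error M A B W Z = (\<Sum>x\<in>A. \<Sum>y\<in>B. W x y * T x y)"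
    by blast
  then show "b \<le> e"
    unfolding e using bound by simp
qed

lemma NS_test_threshold:
  fixes W :: "'a \<Rightarrow> 'b \<Rightarrow> real"
  assumes M: "2 \<le> M" and P0: "\<And>x. x \<in> A \<Longrightarrow> 0 \<le> P x" and P1: "sum P A = 1"
    and tail: "\<And>y. y \<in> B \<Longrightarrow> (\<Sum>x\<in>A. if \<tau> y < W x y then P x else 0) \<le> 1 / real M"
  defines "T \<equiv> \<lambda>x y. if W x y \<le> \<tau> y
      then P x * ((1 - 1 / real M) / (\<Sum>x'\<in>A. if W x' y \<le> \<tau> y then P x' else 0)) else 0"
  shows "NS_test M A B P T"
proof -
  define c where "c = 1 - 1 / real M"
  define below where "below y = (\<Sum>x\<in>A. if W x y \<le> \<tau> y then P x else 0)" for y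
  have c: "0 < c" "c \<le> 1"
    unfolding c_def using M by (simp_all add: field_simps)
  have below: "c \<le> below y" if "y \<in> B" for y
  proof -
    have "(\<Sum>x\<in>A. if \<tau> y < W x y then P x else 0) + below y = 1"
      unfolding below_def using P1 by (simp add: sum.distrib[symmetric] if_distrib cong: if_cong)
    then show ?thesis
      using tail[OF that] unfolding c_def by linarith
  qed
  have ratio: "0 < c / below y" "c / below y \<le> 1" if "y \<in> B" for y
    using below[OF that] c by (simp_all add: divide_le_eq)
  have "0 \<le> T x y \<and> T x y \<le> P x" if "x \<in> A" "y \<in> B" for x y
  proof -
    have "0 \<le> P x * (c / below y)"
      using ratio[OF that(2)] P0[OF that(1)] by (intro mult_nonneg_nonneg) auto
    moreover have "P x * (c / below y) \<le> P x"
      using ratio[OF that(2)] P0[OF that(1)] mult_left_mono[of "c / below y" 1 "P x"] by auto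
    ultimately show ?thesis
      unfolding T_def c_def[symmetric] below_def[symmetric] using P0[OF that(1)] by auto
  qed
  moreover have "(\<Sum>x\<in>A. T x y) = c" if "y \<in> B" for y
  proof -
    have "(\<Sum>x\<in>A. T x y) = (\<Sum>x\<in>A. (if W x y \<le> \<tau> y then P x else 0) * (c / below y))"
      unfolding T_def c_def below_def by (intro sum.cong) auto
    also have "\<dots> = below y * (c / below y)"
      by (simp only: below_def sum_distrib_right)
    finally show ?thesis
      using below[OF that] c by simp
  qed
  ultimately show ?thesis
    unfolding NS_test_def c_def[symmetric] using P0 P1 by blast
qed

lemma eps_NS_le_threshold:
  fixes W :: "'a \<Rightarrow> 'b \<Rightarrow> real"
  assumes M: "2 \<le> M" and B: "B \<noteq> {}" and W0: "\<And>x y. 0 \<le> W x y"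
    and W1: "\<And>x. x \<in> A \<Longrightarrow> (\<Sum>y\<in>B. W x y) = 1"
    and P0: "\<And>x. x \<in> A \<Longrightarrow> 0 \<le> P x" and P1: "sum P A = 1"
    and \<tau>0: "\<And>y. 0 \<le> \<tau> y"
    and tail: "\<And>y. y \<in> B \<Longrightarrow> (\<Sum>x\<in>A. if \<tau> y < W x y then P x else 0) \<le> 1 / real M"
  shows "eps_NS M A B W \<le> (\<Sum>y\<in>B. \<tau> y)"
proof -
  define T where "T x y = (if W x y \<le> \<tau> y
      then P x * ((1 - 1 / real M) / (\<Sum>x'\<in>A. if W x' y \<le> \<tau> y then P x' else 0)) else 0)" for x y
  have test: "NS_test M A B P T"
    unfolding T_def using M P0 P1 tail by (rule NS_test_threshold)
  have T0: "\<And>x y. \<tau> y < W x y \<Longrightarrow> T x y = 0"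
    unfolding T_def by simp
  have T: "\<And>x y. x \<in> A \<Longrightarrow> y \<in> B \<Longrightarrow> 0 \<le> T x y"
    and Tsum: "\<And>y. y \<in> B \<Longrightarrow> (\<Sum>x\<in>A. T x y) = 1 - 1 / real M"
    using test unfolding NS_test_def by auto
  have "eps_NS M A B W \<le> (\<Sum>y\<in>B. \<Sum>x\<in>A. W x y * T x y)"
    using eps_NS_le_test_error[OF M B W0 _ test] W1 by (simp add: sum.swap[of _ A])
  also have "\<dots> \<le> (\<Sum>y\<in>B. \<Sum>x\<in>A. \<tau> y * T x y)"
  proof (intro sum_mono)
    fix y x assume "y \<in> B" "x \<in> A"
    show "W x y * T x y \<le> \<tau> y * T x y"
    proof (cases "W x y \<le> \<tau> y")
      case True
      show ?thesis
        using mult_right_mono[OF True T[OF \<open>x \<in> A\<close> \<open>y \<in> B\<close>]] .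
    qed (simp add: T0)
  qed
  also have "\<dots> = (\<Sum>y\<in>B. (1 - 1 / real M) * \<tau> y)"
    by (simp add: sum_distrib_left[symmetric] Tsum mult.commute)
  also have "\<dots> \<le> (\<Sum>y\<in>B. \<tau> y)"
    using \<tau>0 M by (intro sum_mono mult_left_le_one_le) auto
  finally show ?thesis .
qed

text \<open>The converse half of the hypothesis-testing argument: under an auxiliary output
  distribution \<open>Q\<close> every test has column weight \<open>1 - 1/M\<close>, and it can only escape the
  penalty \<open>exp g * W\<close> where \<open>Q y > exp g * W x y\<close>.\<close>

lemma NS_test_error_ge:
  fixes W :: "'a \<Rightarrow> 'b \<Rightarrow> real"
  assumes test: "NS_test M A B P T" and W0: "\<And>x y. 0 \<le> W x y"
    and Q0: "\<And>y. 0 \<le> Q y" and Q1: "sum Q B = 1"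
  shows "exp (- g) * (1 - 1 / real M - (\<Sum>x\<in>A. P x * (\<Sum>y\<in>B. if exp g * W x y < Q y then Q y else 0)))
       \<le> (\<Sum>x\<in>A. \<Sum>y\<in>B. W x y * T x y)"
proof -
  have T: "\<And>x y. x \<in> A \<Longrightarrow> y \<in> B \<Longrightarrow> 0 \<le> T x y \<and> T x y \<le> P x"
    and Tsum: "\<And>y. y \<in> B \<Longrightarrow> (\<Sum>x\<in>A. T x y) = 1 - 1 / real M"
    using test unfolding NS_test_def by auto
  define escape where "escape x y \<longleftrightarrow> exp g * W x y < Q y" for x y
  have "1 - 1 / real M = (\<Sum>y\<in>B. Q y * (\<Sum>x\<in>A. T x y))"
    using Q1 by (simp add: Tsum sum_distrib_right[symmetric])
  also have "\<dots> = (\<Sum>x\<in>A. \<Sum>y\<in>B. Q y * T x y)"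
    by (simp add: sum_distrib_left sum.swap[of _ B])
  also have "\<dots> \<le> (\<Sum>x\<in>A. \<Sum>y\<in>B. exp g * (W x y * T x y) + P x * (if escape x y then Q y else 0))"
  proof (intro sum_mono)
    fix x y assume "x \<in> A" "y \<in> B"
    then have T': "0 \<le> T x y" "T x y \<le> P x"
      using T by auto
    have WT: "0 \<le> exp g * (W x y * T x y)"
      using W0[of x y] T' by simp
    show "Q y * T x y \<le> exp g * (W x y * T x y) + P x * (if escape x y then Q y else 0)"
    proof (cases "escape x y")
      case True
      then show ?thesis
        using WT mult_left_mono[OF T'(2) Q0[of y]] by (simp add: mult_ac)
    next
      case False
      then show ?thesis
        using mult_right_mono[of "Q y" "exp g * W x y" "T x y"] T' unfolding escape_def by simp
    qed
  qed
  also have "\<dots> = exp g * (\<Sum>x\<in>A. \<Sum>y\<in>B. W x y * T x y)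
      + (\<Sum>x\<in>A. P x * (\<Sum>y\<in>B. if escape x y then Q y else 0))"
    by (simp add: sum.distrib sum_distrib_left)
  finally show ?thesis
    unfolding escape_def by (simp add: exp_minus field_simps)
qed

section \<open>The umlaut information in closed form\<close>

text \<open>For fixed \<open>P\<close>, the minimum over \<open>Q\<close> of \<open>D(P \<times> Q \<parallel> P\<^sub>X\<^sub>Y)\<close> is attained at the normalisation of the
  \<open>P\<close>-weighted geometric mean of the rows of \<open>W\<close>; it is zero at \<open>y\<close> unless every input in the
  support of \<open>P\<close> can produce \<open>y\<close>.\<close>

definition geo_mean :: "('x::finite \<Rightarrow> 'y \<Rightarrow> real) \<Rightarrow> ('x \<Rightarrow> real) \<Rightarrow> 'y \<Rightarrow> real" where
  "geo_mean W P y =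
     (if \<forall>x. 0 < P x \<longrightarrow> 0 < W x y then exp (\<Sum>x\<in>UNIV. P x * ln (W x y)) else 0)"

definition geo_mass :: "('x::finite \<Rightarrow> 'y::finite \<Rightarrow> real) \<Rightarrow> ('x \<Rightarrow> real) \<Rightarrow> real" where
  "geo_mass W P = (\<Sum>y\<in>UNIV. geo_mean W P y)"

definition umlaut_at :: "('x::finite \<Rightarrow> 'y::finite \<Rightarrow> real) \<Rightarrow> ('x \<Rightarrow> real) \<Rightarrow> ereal" where
  "umlaut_at W P = (if geo_mass W P = 0 then \<infinity> else ereal (- ln (geo_mass W P)))"

lemma geo_mean_nonneg: "0 \<le> geo_mean W P y"
  unfolding geo_mean_def by simp

lemma geo_mass_nonneg: "0 \<le> geo_mass W P"
  unfolding geo_mass_def by (intro sum_nonneg geo_mean_nonneg)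

lemma umlaut_at_not_MInf: "umlaut_at W P \<noteq> - \<infinity>"
  unfolding umlaut_at_def by simp

lemma sum_UNIV_pair:
  fixes f :: "'a::finite \<times> 'b::finite \<Rightarrow> real"
  shows "(\<Sum>a\<in>UNIV. f a) = (\<Sum>x\<in>UNIV. \<Sum>y\<in>UNIV. f (x, y))"
  by (simp add: UNIV_Times_UNIV[symmetric] sum.cartesian_product del: UNIV_Times_UNIV)

lemma KL_product_eq:
  fixes W :: "'x::finite \<Rightarrow> 'y::finite \<Rightarrow> real"
  assumes pos: "\<And>x y. 0 < P x \<Longrightarrow> 0 < Q y \<Longrightarrow> 0 < W x y"
    and P0: "\<And>x. 0 \<le> P x" and Q0: "\<And>y. 0 \<le> Q y"
  shows "KL_div (\<lambda>(x, y). P x * Q y) (\<lambda>(x, y). P x * W x y)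
     = ereal (\<Sum>x\<in>UNIV. \<Sum>y\<in>UNIV. P x * Q y * (ln (Q y) - ln (W x y)))"
proof -
  have PQ: "0 < P x \<and> 0 < Q y \<longleftrightarrow> 0 < P x * Q y" for x y
    using P0[of x] Q0[of y] by (auto simp: zero_less_mult_iff)
  have abs_cont: "\<not> (\<exists>a. (\<lambda>(x, y). P x * Q y) a > 0 \<and> (\<lambda>(x, y). P x * W x y) a = 0)"
    using pos PQ by fastforce
  have "(\<Sum>a\<in>{a. (\<lambda>(x, y). P x * Q y) a > 0}. (\<lambda>(x, y). P x * Q y) a *
          ln ((\<lambda>(x, y). P x * Q y) a / (\<lambda>(x, y). P x * W x y) a))
      = (\<Sum>a\<in>UNIV. (\<lambda>(x, y). P x * Q y * (ln (Q y) - ln (W x y))) a)"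
  proof (rule sum.mono_neutral_cong_left)
    show "\<forall>a\<in>UNIV - {a. (\<lambda>(x, y). P x * Q y) a > 0}. (\<lambda>(x, y). P x * Q y * (ln (Q y) - ln (W x y))) a = 0"
      using P0 Q0 PQ by (auto simp: less_le)
  next
    fix a assume "a \<in> {a. (\<lambda>(x, y). P x * Q y) a > 0}"
    then obtain x y where a: "a = (x, y)" and "0 < P x" "0 < Q y"
      using PQ by (cases a) auto
    moreover have "0 < W x y"
      using pos \<open>0 < P x\<close> \<open>0 < Q y\<close> .
    ultimately show "(\<lambda>(x, y). P x * Q y) a * ln ((\<lambda>(x, y). P x * Q y) a / (\<lambda>(x, y). P x * W x y) a)
       = (\<lambda>(x, y). P x * Q y * (ln (Q y) - ln (W x y))) a"
      by (simp add: ln_divide_pos)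
  qed auto
  also have "\<dots> = (\<Sum>x\<in>UNIV. \<Sum>y\<in>UNIV. P x * Q y * (ln (Q y) - ln (W x y)))"
    by (subst sum_UNIV_pair) simp
  finally show ?thesis
    unfolding KL_div_def using abs_cont by simp
qed

lemma KL_product_eq_geo_mean:
  fixes W :: "'x::finite \<Rightarrow> 'y::finite \<Rightarrow> real"
  assumes pos: "\<And>x y. 0 < P x \<Longrightarrow> 0 < Q y \<Longrightarrow> 0 < W x y"
    and P: "is_distr P" and Q0: "\<And>y. 0 \<le> Q y"
  shows "KL_div (\<lambda>(x, y). P x * Q y) (\<lambda>(x, y). P x * W x y)
     = ereal (\<Sum>y\<in>UNIV. Q y * (ln (Q y) - ln (geo_mean W P y)))"
proof -
  have P0: "\<And>x. 0 \<le> P x" and P1: "sum P UNIV = 1"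
    using P unfolding is_distr_def by auto
  have "(\<Sum>x\<in>UNIV. P x * Q y * (ln (Q y) - ln (W x y))) = Q y * (ln (Q y) - ln (geo_mean W P y))" for y
  proof (cases "0 < Q y")
    case True
    have "(\<Sum>x\<in>UNIV. P x * Q y * (ln (Q y) - ln (W x y)))
        = Q y * (sum P UNIV * ln (Q y) - (\<Sum>x\<in>UNIV. P x * ln (W x y)))"
      by (simp add: algebra_simps sum_subtractf sum_distrib_left sum_distrib_right)
    then show ?thesis
      using pos[OF _ True] P1 by (simp add: geo_mean_def)
  qed (use Q0[of y] in simp)
  moreover have "(\<Sum>x\<in>UNIV. \<Sum>y\<in>UNIV. P x * Q y * (ln (Q y) - ln (W x y)))
      = (\<Sum>y\<in>UNIV. \<Sum>x\<in>UNIV. P x * Q y * (ln (Q y) - ln (W x y)))"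
    by (rule sum.swap)
  ultimately show ?thesis
    using KL_product_eq[where P = P and Q = Q and W = W, OF pos P0 Q0] by simp
qed

lemma gibbs_inequality:
  fixes Q g :: "'y::finite \<Rightarrow> real"
  assumes Q: "is_distr Q" and g0: "\<And>y. 0 \<le> g y" and g: "\<And>y. 0 < Q y \<Longrightarrow> 0 < g y"
  shows "0 < sum g UNIV" and "- ln (sum g UNIV) \<le> (\<Sum>y\<in>UNIV. Q y * (ln (Q y) - ln (g y)))"
proof -
  have Q0: "\<And>y. 0 \<le> Q y" and Q1: "sum Q UNIV = 1"
    using Q unfolding is_distr_def by auto
  obtain y0 where "0 < Q y0"
    using is_distr_ex_pos[OF Q] .
  then have "0 < g y0"
    by (rule g)
  moreover have "g y0 \<le> sum g UNIV"
    by (rule member_le_sum) (auto simp: g0)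
  ultimately show Z: "0 < sum g UNIV"
    by linarith
  define Z where "Z = sum g UNIV"
  have pointwise: "Q y * (ln (g y) - ln (Q y) - ln Z) \<le> g y / Z - Q y" for y
  proof (cases "0 < Q y")
    case True
    have "ln (g y) - ln (Q y) - ln Z = ln (g y / (Q y * Z))"
      using g[OF True] True Z by (simp add: Z_def ln_div ln_mult)
    also have "\<dots> \<le> g y / (Q y * Z) - 1"
      using g[OF True] True Z by (intro ln_le_minus_one) (simp add: Z_def)
    finally have "Q y * (ln (g y) - ln (Q y) - ln Z) \<le> Q y * (g y / (Q y * Z) - 1)"
      using True by (simp add: mult_left_mono)
    also have "\<dots> = g y / Z - Q y"
      using True by (simp add: field_simps)
    finally show ?thesis .
  qed (use Q0[of y] g0[of y] Z in \<open>simp add: Z_def\<close>)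
  have "- (\<Sum>y\<in>UNIV. Q y * (ln (Q y) - ln (g y))) - ln Z
      = (\<Sum>y\<in>UNIV. - (Q y * (ln (Q y) - ln (g y)))) - (\<Sum>y\<in>UNIV. Q y * ln Z)"
    using Q1 by (simp add: sum_negf sum_distrib_right[symmetric])
  also have "\<dots> = (\<Sum>y\<in>UNIV. Q y * (ln (g y) - ln (Q y) - ln Z))"
    by (simp add: sum_subtractf[symmetric] algebra_simps)
  also have "\<dots> \<le> (\<Sum>y\<in>UNIV. g y / Z - Q y)"
    by (intro sum_mono pointwise)
  also have "\<dots> = 0"
    using Z Q1 by (simp add: Z_def sum_subtractf sum_divide_distrib[symmetric])
  finally show "- ln (sum g UNIV) \<le> (\<Sum>y\<in>UNIV. Q y * (ln (Q y) - ln (g y)))"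
    by (simp add: Z_def)
qed

lemma umlaut_at_le_KL:
  fixes W :: "'x::finite \<Rightarrow> 'y::finite \<Rightarrow> real"
  assumes W: "is_channel W" and P: "is_distr P" and Q: "is_distr Q"
  shows "umlaut_at W P \<le> KL_div (\<lambda>(x, y). P x * Q y) (\<lambda>(x, y). P x * W x y)"
proof (cases "\<exists>x y. 0 < P x \<and> 0 < Q y \<and> W x y = 0")
  case True
  then obtain x y where "0 < P x" "0 < Q y" "W x y = 0"
    by blast
  then have "KL_div (\<lambda>(x, y). P x * Q y) (\<lambda>(x, y). P x * W x y) = \<infinity>"
    unfolding KL_div_def by (intro if_P exI[of _ "(x, y)"]) simp
  then show ?thesis
    by simp
next
  case False
  have Q0: "\<And>y. 0 \<le> Q y"
    using Q unfolding is_distr_def by auto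
  have pos: "\<And>x y. 0 < P x \<Longrightarrow> 0 < Q y \<Longrightarrow> 0 < W x y"
    using False channel_nonneg[OF W] by (metis less_eq_real_def)
  have "0 < geo_mean W P y" if "0 < Q y" for y
    using pos[OF _ that] by (simp add: geo_mean_def)
  note gibbs = gibbs_inequality[OF Q geo_mean_nonneg this]
  have "0 < geo_mass W P" "- ln (geo_mass W P) \<le> (\<Sum>y\<in>UNIV. Q y * (ln (Q y) - ln (geo_mean W P y)))"
    unfolding geo_mass_def using gibbs by simp_all
  then show ?thesis
    using KL_product_eq_geo_mean[where P = P and Q = Q and W = W, OF pos P Q0]
    by (simp add: umlaut_at_def)
qed

lemma KL_geo_mean_eq_umlaut_at:
  fixes W :: "'x::finite \<Rightarrow> 'y::finite \<Rightarrow> real"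
  assumes P: "is_distr P" and Z: "0 < geo_mass W P"
  defines "Q \<equiv> \<lambda>y. geo_mean W P y / geo_mass W P"
  shows "is_distr Q" and "KL_div (\<lambda>(x, y). P x * Q y) (\<lambda>(x, y). P x * W x y) = umlaut_at W P"
proof -
  have Q0: "\<And>y. 0 \<le> Q y"
    unfolding Q_def using Z by (simp add: geo_mean_nonneg)
  have "sum Q UNIV = 1"
    unfolding Q_def using Z by (simp add: sum_divide_distrib[symmetric] geo_mass_def)
  then show "is_distr Q"
    using Q0 unfolding is_distr_def by simp
  have g: "0 < geo_mean W P y" if "0 < Q y" for y
    using that Z unfolding Q_def by (simp add: zero_less_divide_iff)
  have pos: "0 < W x y" if "0 < P x" "0 < Q y" for x y
    using g[OF that(2)] that(1) unfolding geo_mean_def by (auto split: if_splits)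
  have "Q y * (ln (Q y) - ln (geo_mean W P y)) = Q y * - ln (geo_mass W P)" for y
  proof (cases "0 < Q y")
    case True
    then show ?thesis
      using g[OF True] Z by (simp add: Q_def ln_div)
  next
    case False
    then show ?thesis
      using Q0[of y] by simp
  qed
  then have "(\<Sum>y\<in>UNIV. Q y * (ln (Q y) - ln (geo_mean W P y))) = - ln (geo_mass W P)"
    using \<open>sum Q UNIV = 1\<close> by (simp add: sum_negf sum_distrib_right[symmetric])
  then show "KL_div (\<lambda>(x, y). P x * Q y) (\<lambda>(x, y). P x * W x y) = umlaut_at W P"
    using KL_product_eq_geo_mean[where P = P and Q = Q and W = W, OF pos P Q0] Z unfolding umlaut_at_def by simp
qed

lemma umlaut_info_eq_SUP_umlaut_at:
  fixes W :: "'x::finite \<Rightarrow> 'y::finite \<Rightarrow> real"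
  assumes W: "is_channel W"
  shows "umlaut_info W = (SUP P\<in>{P. is_distr P}. umlaut_at W P)"
  unfolding umlaut_info_def
proof (rule SUP_cong[OF refl], rule antisym)
  fix P :: "'x \<Rightarrow> real" assume P: "P \<in> {P. is_distr P}"
  show "umlaut_at W P \<le> (INF Q\<in>{Q. is_distr Q}. KL_div (\<lambda>(x, y). P x * Q y) (\<lambda>(x, y). P x * W x y))"
    using umlaut_at_le_KL[OF W] P by (auto intro!: INF_greatest)
  show "(INF Q\<in>{Q. is_distr Q}. KL_div (\<lambda>(x, y). P x * Q y) (\<lambda>(x, y). P x * W x y)) \<le> umlaut_at W P"
  proof (cases "0 < geo_mass W P")
    case True
    then show ?thesis
      using KL_geo_mean_eq_umlaut_at[OF _ True] P by (intro INF_lower2) auto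
  next
    case False
    then show ?thesis
      using geo_mass_nonneg[of W P] by (simp add: umlaut_at_def)
  qed
qed

section \<open>A saddle point\<close>

text \<open>On the face of the simplex of input distributions supported in \<open>S\<close>, the function
  \<open>P \<mapsto> - ln (geo_mass W P)\<close> is continuous once the outputs are restricted to those that every
  \<open>x \<in> S\<close> can produce; this is \<open>face_value\<close>.\<close>

definition common_support :: "('x \<Rightarrow> 'y \<Rightarrow> real) \<Rightarrow> 'x set \<Rightarrow> 'y set" where
  "common_support W S = {y. \<forall>x\<in>S. 0 < W x y}"

definition face :: "'x::finite set \<Rightarrow> ('x \<Rightarrow> real) set" where
  "face S = {p. (\<forall>x. 0 \<le> p x) \<and> (\<forall>x. x \<notin> S \<longrightarrow> p x = 0) \<and> sum p UNIV = 1}"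

definition face_value :: "('x::finite \<Rightarrow> 'y::finite \<Rightarrow> real) \<Rightarrow> 'x set \<Rightarrow> ('x \<Rightarrow> real) \<Rightarrow> real" where
  "face_value W S p = - ln (\<Sum>y\<in>common_support W S. exp (\<Sum>x\<in>S. p x * ln (W x y)))"

lemma face_is_distr: "p \<in> face S \<Longrightarrow> is_distr p"
  unfolding face_def is_distr_def by auto

lemma sum_face_restrict:
  fixes p :: "'x::finite \<Rightarrow> real"
  assumes "p \<in> face S" "S \<subseteq> S'"
  shows "(\<Sum>x\<in>S'. p x * c x) = (\<Sum>x\<in>S. p x * c x)"
  using assms unfolding face_def by (intro sum.mono_neutral_right) auto

definition uniform_on :: "'x set \<Rightarrow> 'x \<Rightarrow> real" where
  "uniform_on S x = (if x \<in> S then 1 / real (card S) else 0)"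

lemma uniform_on_face:
  fixes S :: "'x::finite set"
  assumes "S \<noteq> {}"
  shows "uniform_on S \<in> face S"
proof -
  have "0 < card S"
    using assms by (simp add: card_gt_0_iff)
  then have "(\<Sum>x\<in>UNIV. uniform_on S x) = 1"
    using assms by (simp add: uniform_on_def sum.If_cases)
  then show ?thesis
    unfolding face_def by (auto simp: uniform_on_def)
qed

lemma uniform_on_pos: "finite S \<Longrightarrow> x \<in> S \<Longrightarrow> 0 < uniform_on S x"
  unfolding uniform_on_def by (auto simp: card_gt_0_iff)

lemma geo_mass_face:
  fixes W :: "'x::finite \<Rightarrow> 'y::finite \<Rightarrow> real"
  assumes p: "p \<in> face S" and pos: "\<And>x. x \<in> S \<Longrightarrow> 0 < p x"
  shows "geo_mass W p = (\<Sum>y\<in>common_support W S. exp (\<Sum>x\<in>S. p x * ln (W x y)))"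
proof -
  have p0: "\<And>x. x \<notin> S \<Longrightarrow> p x = 0"
    using p unfolding face_def by auto
  have supp: "(\<forall>x. 0 < p x \<longrightarrow> 0 < W x y) \<longleftrightarrow> y \<in> common_support W S" for y
  proof
    assume "\<forall>x. 0 < p x \<longrightarrow> 0 < W x y"
    then show "y \<in> common_support W S"
      unfolding common_support_def using pos by blast
  next
    assume "y \<in> common_support W S"
    then show "\<forall>x. 0 < p x \<longrightarrow> 0 < W x y"
      unfolding common_support_def using p0 by force
  qed
  have restrict: "(\<Sum>x\<in>UNIV. p x * ln (W x y)) = (\<Sum>x\<in>S. p x * ln (W x y))" for y
    using p0 by (intro sum.mono_neutral_right) auto
  have "geo_mass W p
      = (\<Sum>y\<in>UNIV. if y \<in> common_support W S then exp (\<Sum>x\<in>S. p x * ln (W x y)) else 0)"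
    unfolding geo_mass_def geo_mean_def supp restrict ..
  also have "\<dots> = (\<Sum>y\<in>common_support W S. exp (\<Sum>x\<in>S. p x * ln (W x y)))"
    by (simp add: sum.If_cases)
  finally show ?thesis .
qed

lemma umlaut_at_face:
  fixes W :: "'x::finite \<Rightarrow> 'y::finite \<Rightarrow> real"
  assumes p: "p \<in> face S" and pos: "\<And>x. x \<in> S \<Longrightarrow> 0 < p x"
    and Y: "common_support W S \<noteq> {}"
  shows "umlaut_at W p = ereal (face_value W S p)"
proof -
  have mass: "geo_mass W p = (\<Sum>y\<in>common_support W S. exp (\<Sum>x\<in>S. p x * ln (W x y)))"
    by (rule geo_mass_face[OF p pos])
  have "0 < geo_mass W p"
    unfolding mass using Y by (intro sum_pos) auto
  then show ?thesis
    unfolding umlaut_at_def face_value_def mass by simp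
qed

lemma umlaut_info_not_MInf:
  fixes W :: "'x::finite \<Rightarrow> 'y::finite \<Rightarrow> real"
  assumes W: "is_channel W"
  shows "umlaut_info W \<noteq> - \<infinity>"
proof -
  have "umlaut_at W (uniform_on UNIV) \<le> umlaut_info W"
    unfolding umlaut_info_eq_SUP_umlaut_at[OF W]
    using face_is_distr[OF uniform_on_face] by (intro SUP_upper) auto
  then show ?thesis
    using umlaut_at_not_MInf[of W "uniform_on UNIV"] by auto
qed

lemma common_support_nonempty:
  fixes W :: "'x::finite \<Rightarrow> 'y::finite \<Rightarrow> real"
  assumes W: "is_channel W" and U: "umlaut_info W \<noteq> \<infinity>" and S: "S \<noteq> {}"
  shows "common_support W S \<noteq> {}"
proof
  assume Y: "common_support W S = {}"
  have "geo_mass W (uniform_on S)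
      = (\<Sum>y\<in>common_support W S. exp (\<Sum>x\<in>S. uniform_on S x * ln (W x y)))"
    by (rule geo_mass_face[OF uniform_on_face[OF S]]) (simp add: uniform_on_pos)
  then have "geo_mass W (uniform_on S) = 0"
    using Y by simp
  then have "umlaut_at W (uniform_on S) = \<infinity>"
    unfolding umlaut_at_def by simp
  moreover have "umlaut_at W (uniform_on S) \<le> umlaut_info W"
    unfolding umlaut_info_eq_SUP_umlaut_at[OF W]
    using face_is_distr[OF uniform_on_face[OF S]] by (intro SUP_upper) auto
  ultimately show False
    using U by simp
qed

lemma sum_exp_common_support_pos:
  fixes W :: "'x \<Rightarrow> 'y::finite \<Rightarrow> real" and a :: "'y \<Rightarrow> real"
  shows "common_support W S \<noteq> {} \<Longrightarrow> 0 < (\<Sum>y\<in>common_support W S. exp (a y))"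
  by (intro sum_pos) auto

lemma face_value_attains_max:
  fixes W :: "'x::finite \<Rightarrow> 'y::finite \<Rightarrow> real"
  assumes S: "S \<noteq> {}" and Y: "common_support W S \<noteq> {}"
  shows "\<exists>p\<in>face S. \<forall>q\<in>face S. face_value W S q \<le> face_value W S p"
proof -
  define K where "K = {v::real^'x. (\<lambda>x. v $ x) \<in> face S}"
  have K_eq: "K = (\<Inter>x. {v. 0 \<le> v $ x}) \<inter> (\<Inter>x\<in>-S. {v. v $ x = 0}) \<inter> {v. (\<Sum>x\<in>UNIV. v $ x) = 1}"
    unfolding K_def face_def by auto
  have "closed K"
    unfolding K_eq
    by (intro closed_Int closed_INT ballI closed_Collect_eq closed_halfspace_component_ge_cart)
      (auto intro!: continuous_intros)
  moreover have "K \<subseteq> cball 0 1"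
  proof
    fix v assume "v \<in> K"
    then have "(\<Sum>i\<in>UNIV. \<bar>v $ i\<bar>) = 1"
      unfolding K_def face_def by auto
    then show "v \<in> cball 0 1"
      using norm_le_l1_cart[of v] by simp
  qed
  ultimately have "compact K"
    using bounded_cball bounded_subset compact_eq_bounded_closed by blast
  have vec: "($) (vec_lambda q) = q" for q :: "'x \<Rightarrow> real"
    by (rule ext) simp
  have "(\<chi> x. uniform_on S x) \<in> K"
    using uniform_on_face[OF S] by (simp add: K_def vec)
  then have "K \<noteq> {}"
    by blast
  have "continuous_on K (\<lambda>v. face_value W S (\<lambda>x. v $ x))"
    unfolding face_value_def
    by (intro continuous_intros) (simp add: sum_exp_common_support_pos[OF Y] less_imp_neq[symmetric])
  then obtain v where "v \<in> K" and v: "\<And>w. w \<in> K \<Longrightarrow> face_value W S (\<lambda>x. w $ x) \<le> face_value W S (\<lambda>x. v $ x)"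
    using continuous_attains_sup[OF \<open>compact K\<close> \<open>K \<noteq> {}\<close>] by blast
  show ?thesis
  proof (intro bexI ballI)
    show "(\<lambda>x. v $ x) \<in> face S"
      using \<open>v \<in> K\<close> unfolding K_def by simp
    fix q assume "q \<in> face S"
    then have "(\<chi> x. q x) \<in> K"
      by (simp add: K_def vec)
    then show "face_value W S q \<le> face_value W S (\<lambda>x. v $ x)"
      using v[of "\<chi> x. q x"] by simp
  qed
qed

text \<open>Points on the relative boundary of a face are limits of interior points, where
  \<open>face_value\<close> agrees with \<open>umlaut_at\<close>.\<close>

lemma face_value_le_umlaut_info:
  fixes W :: "'x::finite \<Rightarrow> 'y::finite \<Rightarrow> real"
  assumes W: "is_channel W" and U: "umlaut_info W = ereal u" and S: "S \<noteq> {}" and p: "p \<in> face S"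
  shows "face_value W S p \<le> u"
proof -
  have Y: "common_support W S \<noteq> {}"
    using common_support_nonempty[OF W _ S] U by simp
  have p0: "\<forall>x. 0 \<le> p x" "\<forall>x. x \<notin> S \<longrightarrow> p x = 0" "sum p UNIV = 1"
    using p unfolding face_def by auto
  have u0: "\<forall>x. 0 \<le> uniform_on S x" "\<forall>x. x \<notin> S \<longrightarrow> uniform_on S x = 0" "sum (uniform_on S) UNIV = 1"
    using uniform_on_face[OF S] unfolding face_def by auto
  define v where "v t x = (1 - t) * p x + t * uniform_on S x" for t :: real and x
  define f where "f t = face_value W S (v t)" for t
  have bound: "f t \<le> u" if t: "0 < t" "t < 1" for t
  proof -
    have face: "v t \<in> face S"
      unfolding face_def v_def using p0 u0 t by (auto simp: sum.distrib sum_distrib_left[symmetric])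
    have "0 < v t x" if "x \<in> S" for x
      unfolding v_def using p0 t uniform_on_pos[OF _ that] by (simp add: add_nonneg_pos)
    then have "umlaut_at W (v t) = ereal (f t)"
      unfolding f_def by (rule umlaut_at_face[OF face _ Y])
    moreover have "umlaut_at W (v t) \<le> umlaut_info W"
      unfolding umlaut_info_eq_SUP_umlaut_at[OF W]
      using face_is_distr[OF face] by (intro SUP_upper) auto
    ultimately show ?thesis
      using U by simp
  qed
  have "continuous (at 0) f"
    unfolding f_def face_value_def v_def
    by (intro continuous_intros) (simp add: sum_exp_common_support_pos[OF Y] less_imp_neq[symmetric])
  then have "(f \<longlongrightarrow> f 0) (at 0)"
    by (simp add: continuous_at)
  then have "(f \<longlongrightarrow> f 0) (at_right 0)"
    by (rule tendsto_within_subset) simp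
  moreover have "eventually (\<lambda>t. t \<in> {0<..<1}) (at_right (0::real))"
    by (rule eventually_at_right_real) simp
  then have "eventually (\<lambda>t. f t \<le> u) (at_right 0)"
    by (rule eventually_mono) (use bound in auto)
  ultimately have "f 0 \<le> u"
    by (rule tendsto_upperbound) simp
  moreover have "v 0 = p"
    by (simp add: v_def fun_eq_iff)
  ultimately show ?thesis
    by (simp add: f_def)
qed

lemma best_face_exists:
  fixes W :: "'x::finite \<Rightarrow> 'y::finite \<Rightarrow> real"
  assumes Y: "\<And>S. S \<noteq> {} \<Longrightarrow> common_support W S \<noteq> {}"
  obtains S0 p0 where "S0 \<noteq> {}" and "p0 \<in> face S0"
    and "\<And>S q. S \<noteq> {} \<Longrightarrow> q \<in> face S \<Longrightarrow> face_value W S q \<le> face_value W S0 p0"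
proof -
  have ex: "\<exists>p. p \<in> face S \<and> (\<forall>q\<in>face S. face_value W S q \<le> face_value W S p)"
    if "S \<noteq> {}" for S
    using face_value_attains_max[OF that Y[OF that]] by blast
  define ps where "ps S = (SOME p. p \<in> face S \<and> (\<forall>q\<in>face S. face_value W S q \<le> face_value W S p))" for S
  have ps: "ps S \<in> face S" "\<And>q. q \<in> face S \<Longrightarrow> face_value W S q \<le> face_value W S (ps S)"
    if "S \<noteq> {}" for S
    using someI_ex[OF ex[OF that]] unfolding ps_def by blast+
  define m where "m S = face_value W S (ps S)" for S
  define Ss where "Ss = {S :: 'x set. S \<noteq> {}}"
  have "finite Ss"
    by simp
  moreover have "UNIV \<in> Ss"
    unfolding Ss_def by simp
  ultimately have "Max (m ` Ss) \<in> m ` Ss"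
    by (intro Max_in) auto
  then obtain S0 where S0: "S0 \<in> Ss" and max: "m S0 = Max (m ` Ss)"
    by auto
  show ?thesis
  proof (rule that)
    show "S0 \<noteq> {}" "ps S0 \<in> face S0"
      using S0 ps(1) unfolding Ss_def by auto
    fix S :: "'x set" and q assume "S \<noteq> {}" "q \<in> face S"
    then have "face_value W S q \<le> m S"
      unfolding m_def by (rule ps(2))
    also have "\<dots> \<le> m S0"
      unfolding max using \<open>finite Ss\<close> \<open>S \<noteq> {}\<close> by (intro Max_ge) (auto simp: Ss_def)
    finally show "face_value W S q \<le> face_value W S0 (ps S0)"
      by (simp add: m_def)
  qed
qed

text \<open>Comparing
  \<open>p\<^sub>0\<close> with its mixtures with point masses on larger faces yields first-order conditions,
  which make the normalised geometric mean at \<open>p\<^sub>0\<close> a saddle point.\<close>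

locale best_face =
  fixes W :: "'x::finite \<Rightarrow> 'y::finite \<Rightarrow> real" and S0 :: "'x set" and p0 :: "'x \<Rightarrow> real"
  assumes W_nonneg: "\<And>x y. 0 \<le> W x y"
    and supports_nonempty: "\<And>S. S \<noteq> {} \<Longrightarrow> common_support W S \<noteq> {}"
    and S0_nonempty: "S0 \<noteq> {}"
    and p0_face: "p0 \<in> face S0"
    and best: "\<And>S q. S \<noteq> {} \<Longrightarrow> q \<in> face S \<Longrightarrow> face_value W S q \<le> face_value W S0 p0"
begin

abbreviation Y0 :: "'y set" where
  "Y0 \<equiv> common_support W S0"

definition log_mean :: "'y \<Rightarrow> real" where
  "log_mean y = (\<Sum>x\<in>S0. p0 x * ln (W x y))"

definition mass :: real where
  "mass = (\<Sum>y\<in>Y0. exp (log_mean y))"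

definition mix :: "'x \<Rightarrow> real \<Rightarrow> 'x \<Rightarrow> real" where
  "mix x0 t x = (1 - t) * p0 x + t * (if x = x0 then 1 else 0)"

lemma mass_pos: "0 < mass"
  unfolding mass_def using supports_nonempty[OF S0_nonempty] by (rule sum_exp_common_support_pos)

lemma mix_face:
  assumes "0 \<le> t" "t \<le> 1"
  shows "mix x0 t \<in> face (insert x0 S0)"
  using p0_face assms unfolding face_def mix_def
  by (auto simp: sum.distrib sum_distrib_left[symmetric])

lemma sum_mix_ln:
  "(\<Sum>x\<in>insert x0 S0. mix x0 t x * ln (W x y)) = log_mean y + t * (ln (W x0 y) - log_mean y)"
proof -
  have "(\<Sum>x\<in>insert x0 S0. mix x0 t x * ln (W x y))
      = (1 - t) * (\<Sum>x\<in>insert x0 S0. p0 x * ln (W x y))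
        + t * (\<Sum>x\<in>insert x0 S0. if x = x0 then ln (W x y) else 0)"
  proof -
    have "mix x0 t x * ln (W x y) = (1 - t) * (p0 x * ln (W x y)) + t * (if x = x0 then ln (W x y) else 0)"
      for x
      by (simp add: mix_def algebra_simps)
    then show ?thesis
      by (simp only: sum.distrib sum_distrib_left)
  qed
  also have "(\<Sum>x\<in>insert x0 S0. p0 x * ln (W x y)) = log_mean y"
    unfolding log_mean_def by (rule sum_face_restrict[OF p0_face]) auto
  also have "(\<Sum>x\<in>insert x0 S0. if x = x0 then ln (W x y) else 0) = ln (W x0 y)"
    by (simp add: sum.delta)
  finally show ?thesis
    by (simp add: algebra_simps)
qed

lemma mass_le_mix:
  assumes "0 \<le> t" "t \<le> 1"
  shows "mass \<le> (\<Sum>y\<in>common_support W (insert x0 S0). exp (log_mean y + t * (ln (W x0 y) - log_mean y)))"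
    (is "_ \<le> ?mass_mix")
proof -
  have "- ln ?mass_mix = face_value W (insert x0 S0) (mix x0 t)"
    unfolding face_value_def sum_mix_ln ..
  also have "\<dots> \<le> face_value W S0 p0"
    by (rule best) (simp_all add: mix_face assms)
  also have "\<dots> = - ln mass"
    unfolding face_value_def mass_def log_mean_def ..
  finally have "ln mass \<le> ln ?mass_mix"
    by simp
  moreover have "0 < ?mass_mix"
    by (rule sum_exp_common_support_pos, rule supports_nonempty) simp
  ultimately show ?thesis
    using mass_pos by simp
qed

lemma common_support_best_face:
  assumes y: "y \<in> Y0"
  shows "0 < W x y"
proof (rule ccontr)
  assume "\<not> 0 < W x y"
  then have "W x y = 0"
    using W_nonneg[of x y] by simp
  then have "common_support W (insert x S0) \<subseteq> Y0 - {y}"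
    unfolding common_support_def by auto
  then have "(\<Sum>y\<in>common_support W (insert x S0). exp (log_mean y)) \<le> (\<Sum>y\<in>Y0 - {y}. exp (log_mean y))"
    by (intro sum_mono2) auto
  also have "\<dots> = mass - exp (log_mean y)"
    unfolding mass_def using y by (simp add: sum_diff1)
  finally show False
    using mass_le_mix[of 0 x] exp_gt_zero[of "log_mean y"] by simp
qed

lemma common_support_insert: "common_support W (insert x S0) = Y0"
  using common_support_best_face unfolding common_support_def by auto

text \<open>The derivative at \<open>t = 0\<close> of the mass along \<open>mix x t\<close> is nonnegative.\<close>

lemma first_order_condition: "0 \<le> (\<Sum>y\<in>Y0. exp (log_mean y) * (ln (W x y) - log_mean y))"
proof (rule ccontr)
  define L where "L = (\<Sum>y\<in>Y0. exp (log_mean y) * (ln (W x y) - log_mean y))"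
  define \<phi> where "\<phi> t = (\<Sum>y\<in>Y0. exp (log_mean y + t * (ln (W x y) - log_mean y)))" for t
  assume "\<not> 0 \<le> (\<Sum>y\<in>Y0. exp (log_mean y) * (ln (W x y) - log_mean y))"
  then have "L < 0"
    unfolding L_def by simp
  have "(\<phi> has_real_derivative L) (at 0)"
    unfolding \<phi>_def L_def by (rule derivative_eq_intros refl | simp)+
  then obtain d where "0 < d" and d: "\<And>h. 0 < h \<Longrightarrow> h < d \<Longrightarrow> \<phi> (0 + h) < \<phi> 0"
    using DERIV_neg_dec_right[OF _ \<open>L < 0\<close>] by blast
  define h where "h = min (d / 2) 1"
  have "0 < h" "h < d" "h \<le> 1"
    unfolding h_def using \<open>0 < d\<close> by auto
  then have "\<phi> h < mass"
    using d[of h] by (simp add: \<phi>_def mass_def)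
  moreover have "mass \<le> \<phi> h"
    using mass_le_mix[of h x] \<open>0 < h\<close> \<open>h \<le> 1\<close> unfolding \<phi>_def common_support_insert by simp
  ultimately show False
    by simp
qed

definition Q_opt :: "'y \<Rightarrow> real" where
  "Q_opt y = (if y \<in> Y0 then exp (log_mean y) / mass else 0)"

lemma Q_opt_distr: "is_distr Q_opt"
proof -
  have "sum Q_opt UNIV = (\<Sum>y\<in>Y0. exp (log_mean y) / mass)"
    unfolding Q_opt_def by (simp add: sum.If_cases)
  also have "\<dots> = 1"
    using mass_pos by (simp add: mass_def sum_divide_distrib[symmetric])
  finally show ?thesis
    unfolding is_distr_def Q_opt_def using mass_pos by simp
qed

lemma Q_opt_support: "0 < Q_opt y \<Longrightarrow> 0 < W x y"
  unfolding Q_opt_def by (cases "y \<in> Y0") (auto intro: common_support_best_face)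

lemma divergence_Q_opt_le: "(\<Sum>y\<in>UNIV. Q_opt y * ln (Q_opt y / W x y)) \<le> - ln mass"
proof -
  have "(\<Sum>y\<in>UNIV. Q_opt y * ln (Q_opt y / W x y))
      = (\<Sum>y\<in>Y0. exp (log_mean y) / mass * (log_mean y - ln mass - ln (W x y)))"
  proof -
    have "Q_opt y * ln (Q_opt y / W x y)
        = (if y \<in> Y0 then exp (log_mean y) / mass * (log_mean y - ln mass - ln (W x y)) else 0)" for y
    proof (cases "y \<in> Y0")
      case True
      then have "0 < W x y"
        by (rule common_support_best_face)
      then show ?thesis
        using True mass_pos by (simp add: Q_opt_def ln_div ln_mult)
    qed (simp add: Q_opt_def)
    then show ?thesis
      by (simp add: sum.If_cases)
  qed
  also have "\<dots> = (\<Sum>y\<in>Y0. - (exp (log_mean y) * (ln (W x y) - log_mean y)) / mass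
      - ln mass * (exp (log_mean y) / mass))"
    using mass_pos by (intro sum.cong refl) (simp add: field_simps)
  also have "\<dots> = - (\<Sum>y\<in>Y0. exp (log_mean y) * (ln (W x y) - log_mean y)) / mass
      - ln mass * ((\<Sum>y\<in>Y0. exp (log_mean y)) / mass)"
    by (simp only: sum_subtractf sum_negf sum_divide_distrib[symmetric] sum_distrib_left[symmetric])
  also have "\<dots> \<le> - ln mass"
    using first_order_condition[of x] mass_pos by (simp add: mass_def[symmetric])
  finally show ?thesis .
qed

end

lemma umlaut_saddle_point:
  fixes W :: "'x::finite \<Rightarrow> 'y::finite \<Rightarrow> real"
  assumes W: "is_channel W" and U: "umlaut_info W = ereal u"
  obtains Q where "is_distr Q" and "\<And>x y. 0 < Q y \<Longrightarrow> 0 < W x y"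
    and "\<And>x. (\<Sum>y\<in>UNIV. Q y * ln (Q y / W x y)) \<le> u"
proof -
  have Y: "\<And>S. S \<noteq> {} \<Longrightarrow> common_support W S \<noteq> {}"
    using common_support_nonempty[OF W] U by simp
  obtain S0 p0 where "S0 \<noteq> {}" "p0 \<in> face S0"
    and "\<And>S q. S \<noteq> {} \<Longrightarrow> q \<in> face S \<Longrightarrow> face_value W S q \<le> face_value W S0 p0"
    using best_face_exists[OF Y] by blast
  then interpret best_face W S0 p0
    using channel_nonneg[OF W] Y by unfold_locales auto
  have "face_value W S0 p0 = - ln mass"
    unfolding face_value_def mass_def log_mean_def ..
  then have "- ln mass \<le> u"
    using face_value_le_umlaut_info[OF W U S0_nonempty p0_face] by simp
  then show ?thesis
    using that[OF Q_opt_distr Q_opt_support] divergence_Q_opt_le order_trans by blast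
qed

section \<open>Achievability\<close>

text \<open>Log-likelihoods clipped from below at \<open>-L\<close>: they have bounded variance even where \<open>W x y = 0\<close>.\<close>

definition trunc_ln :: "real \<Rightarrow> real \<Rightarrow> real" where
  "trunc_ln L w = (if w = 0 then - L else max (ln w) (- L))"

definition trunc_geo_mean :: "('x::finite \<Rightarrow> 'y \<Rightarrow> real) \<Rightarrow> ('x \<Rightarrow> real) \<Rightarrow> real \<Rightarrow> 'y \<Rightarrow> real" where
  "trunc_geo_mean W P L y = exp (\<Sum>x\<in>UNIV. P x * trunc_ln L (W x y))"

lemma le_exp_trunc_ln:
  assumes "0 \<le> w"
  shows "w \<le> exp (trunc_ln L w)"
proof (cases "w = 0")
  case False
  then have "w = exp (ln w)"
    using assms by simp
  also have "\<dots> \<le> exp (trunc_ln L w)"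
    using False by (simp add: trunc_ln_def)
  finally show ?thesis .
qed (simp add: trunc_ln_def)

lemma channel_pow_le_exp_trunc_ln:
  assumes "is_channel W"
  shows "channel_pow n W xs ys \<le> exp (\<Sum>i<n. trunc_ln L (W (xs ! i) (ys ! i)))"
proof -
  have "channel_pow n W xs ys \<le> (\<Prod>i<n. exp (trunc_ln L (W (xs ! i) (ys ! i))))"
    unfolding channel_pow_def
    by (intro prod_mono conjI le_exp_trunc_ln channel_nonneg[OF assms])
  then show ?thesis
    by (simp add: exp_sum)
qed

lemma channel_pow_exceed_prob:
  fixes W :: "'x::finite \<Rightarrow> 'y::finite \<Rightarrow> real" and L :: real
  assumes W: "is_channel W" and P: "is_distr P" and \<delta>: "0 < \<delta>" and n: "0 < n"
  defines "\<mu> y \<equiv> (\<Sum>x\<in>UNIV. P x * trunc_ln L (W x y))"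
  defines "V \<equiv> (\<Sum>y\<in>UNIV. \<Sum>x\<in>UNIV. P x * (trunc_ln L (W x y) - \<mu> y)\<^sup>2)"
  shows "(\<Sum>xs\<in>words n. if exp ((\<Sum>i<n. \<mu> (ys ! i)) + real n * \<delta>) < channel_pow n W xs ys
            then iid P n xs else 0) \<le> V / (real n * \<delta>\<^sup>2)"
proof -
  have P0: "\<And>x. 0 \<le> P x" and P1: "sum P UNIV = 1"
    using P unfolding is_distr_def by auto
  define d where "d i x = trunc_ln L (W x (ys ! i)) - \<mu> (ys ! i)" for i x
  have centred: "(\<Sum>x\<in>UNIV. P x * d i x) = 0" for i
    using P1 by (simp add: d_def \<mu>_def right_diff_distrib sum_subtractf sum_distrib_right[symmetric])
  have var: "(\<Sum>x\<in>UNIV. P x * (d i x)\<^sup>2) \<le> V" for i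
    unfolding V_def d_def using P0 by (intro member_le_sum) (auto intro!: sum_nonneg)
  have exceed: "real n * \<delta> \<le> (\<Sum>i<n. d i (xs ! i))"
    if "exp ((\<Sum>i<n. \<mu> (ys ! i)) + real n * \<delta>) < channel_pow n W xs ys" for xs
  proof -
    have "exp ((\<Sum>i<n. \<mu> (ys ! i)) + real n * \<delta>) < exp (\<Sum>i<n. trunc_ln L (W (xs ! i) (ys ! i)))"
      using that channel_pow_le_exp_trunc_ln[OF W, of n xs ys L] by linarith
    then show ?thesis
      by (simp add: d_def sum_subtractf)
  qed
  have "(\<Sum>xs\<in>words n. if exp ((\<Sum>i<n. \<mu> (ys ! i)) + real n * \<delta>) < channel_pow n W xs ys
          then iid P n xs else 0)
      \<le> (\<Sum>xs\<in>words n. if real n * \<delta> \<le> (\<Sum>i<n. d i (xs ! i)) then iid P n xs else 0)"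
    using exceed iid_nonneg[OF P0] by (intro sum_mono) auto
  also have "\<dots> \<le> V / (real n * \<delta>\<^sup>2)"
    by (rule iid_tail_bound[OF P centred var n \<delta>])
  finally show ?thesis .
qed

lemma eventually_div_le:
  fixes V \<delta> \<kappa> :: real
  assumes \<delta>: "0 < \<delta>" and \<kappa>: "0 < \<kappa>"
  shows "eventually (\<lambda>n. V / (real n * \<delta>\<^sup>2) \<le> \<kappa>) sequentially"
proof -
  obtain N :: nat where N: "V / (\<delta>\<^sup>2 * \<kappa>) \<le> real N"
    using real_arch_simple by blast
  have "V / (real n * \<delta>\<^sup>2) \<le> \<kappa>" if n: "max 1 N \<le> n" for n
  proof -
    have "V \<le> \<kappa> * (real N * \<delta>\<^sup>2)"
      using N \<delta> \<kappa> by (simp add: pos_divide_le_eq algebra_simps)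
    also have "\<dots> \<le> \<kappa> * (real n * \<delta>\<^sup>2)"
      using n \<kappa> by (intro mult_left_mono mult_right_mono) auto
    finally show ?thesis
      using n \<delta> by (simp add: pos_divide_le_eq)
  qed
  then show ?thesis
    unfolding eventually_sequentially by blast
qed

lemma eps_NS_channel_pow_le:
  fixes W :: "'x::finite \<Rightarrow> 'y::finite \<Rightarrow> real"
  assumes W: "is_channel W" and P: "is_distr P" and M: "2 \<le> M" and \<delta>: "0 < \<delta>"
  shows "eventually (\<lambda>n. eps_NS M (words n) (words n) (channel_pow n W)
           \<le> exp (real n * \<delta>) * (\<Sum>y\<in>UNIV. trunc_geo_mean W P L y) ^ n) sequentially"
proof -
  have P0: "\<And>x. 0 \<le> P x" and P1: "sum P UNIV = 1"
    using P unfolding is_distr_def by auto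
  define \<mu> where "\<mu> y = (\<Sum>x\<in>UNIV. P x * trunc_ln L (W x y))" for y
  define V where "V = (\<Sum>y\<in>UNIV. \<Sum>x\<in>UNIV. P x * (trunc_ln L (W x y) - \<mu> y)\<^sup>2)"
  have "eventually (\<lambda>n. V / (real n * \<delta>\<^sup>2) \<le> 1 / real M) sequentially"
    using M by (intro eventually_div_le \<delta>) simp
  then show ?thesis
    using eventually_gt_at_top[of 0]
  proof eventually_elim
    case (elim n)
    define \<tau> where "\<tau> ys = exp ((\<Sum>i<n. \<mu> (ys ! i)) + real n * \<delta>)" for ys
    have "eps_NS M (words n) (words n) (channel_pow n W) \<le> (\<Sum>ys\<in>words n. \<tau> ys)"
    proof (rule eps_NS_le_threshold[OF M words_not_empty])
      fix ys :: "'y list"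
      show "(\<Sum>xs\<in>words n. if \<tau> ys < channel_pow n W xs ys then iid P n xs else 0) \<le> 1 / real M"
        unfolding \<tau>_def using channel_pow_exceed_prob[OF W P \<delta>, of n L ys] elim
        by (simp add: \<mu>_def V_def)
    qed (simp_all add: channel_pow_nonneg[OF W] channel_pow_sum[OF W] iid_nonneg[OF P0]
        sum_iid[OF P1] \<tau>_def)
    also have "\<dots> = exp (real n * \<delta>) * (\<Sum>ys\<in>words n. \<Prod>i<n. exp (\<mu> (ys ! i)))"
      unfolding \<tau>_def by (simp add: exp_add exp_sum sum_distrib_left mult.commute)
    also have "(\<Sum>ys\<in>words n. \<Prod>i<n. exp (\<mu> (ys ! i))) = (\<Sum>y\<in>UNIV. trunc_geo_mean W P L y) ^ n"
      using sum_words_prod[where n = n and f = "\<lambda>i y. exp (\<mu> y)"]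
      by (simp add: trunc_geo_mean_def \<mu>_def)
    finally show ?case .
  qed
qed

lemma trunc_geo_mean_eq_geo_mean:
  fixes W :: "'x::finite \<Rightarrow> 'y \<Rightarrow> real"
  assumes pos: "\<And>x. 0 < P x \<Longrightarrow> 0 < W x y" and L: "\<And>x. 0 < P x \<Longrightarrow> - L \<le> ln (W x y)"
    and P0: "\<And>x. 0 \<le> P x"
  shows "trunc_geo_mean W P L y = geo_mean W P y"
proof -
  have "P x * trunc_ln L (W x y) = P x * ln (W x y)" for x
    using pos[of x] L[of x] P0[of x] by (cases "0 < P x") (auto simp: trunc_ln_def)
  then have "(\<Sum>x\<in>UNIV. P x * trunc_ln L (W x y)) = (\<Sum>x\<in>UNIV. P x * ln (W x y))"
    by (rule sum.cong[OF refl])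
  then show ?thesis
    using pos by (simp add: trunc_geo_mean_def geo_mean_def)
qed

lemma trunc_geo_mean_le_exp:
  fixes W :: "'x::finite \<Rightarrow> 'y::finite \<Rightarrow> real"
  assumes W: "is_channel W" and P0: "\<And>x. 0 \<le> P x" and L: "0 \<le> L" and x0: "W x0 y = 0"
  shows "trunc_geo_mean W P L y \<le> exp (- P x0 * L)"
proof -
  have nonpos: "trunc_ln L (W x y) \<le> 0" for x
    using channel_le_1[OF W, of x y] channel_nonneg[OF W, of x y] L by (auto simp: trunc_ln_def)
  have "(\<Sum>x\<in>UNIV - {x0}. P x * trunc_ln L (W x y)) \<le> 0"
    using P0 nonpos by (intro sum_nonpos) (simp add: mult_nonneg_nonpos)
  then have "(\<Sum>x\<in>UNIV. P x * trunc_ln L (W x y)) \<le> - P x0 * L"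
    using x0 by (simp add: sum.remove[of UNIV x0] trunc_ln_def)
  then show ?thesis
    by (simp add: trunc_geo_mean_def)
qed

lemma exp_neg_mult_le:
  fixes p L \<epsilon> :: real
  assumes p: "0 < p" and \<epsilon>: "0 < \<epsilon>" and L: "\<bar>ln \<epsilon>\<bar> / p \<le> L"
  shows "exp (- p * L) \<le> \<epsilon>"
proof -
  have "\<bar>ln \<epsilon>\<bar> \<le> p * L"
    using L p by (simp add: pos_divide_le_eq mult.commute)
  then have "exp (- p * L) \<le> exp (ln \<epsilon>)"
    by simp
  then show ?thesis
    using \<epsilon> by simp
qed

text \<open>Clipping costs at most \<open>\<epsilon>\<close> once \<open>L\<close> dominates every finite \<open>|ln W x y|\<close> and every
  \<open>|ln \<epsilon>| / P x\<close>.\<close>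

lemma trunc_geo_mean_le:
  fixes W :: "'x::finite \<Rightarrow> 'y::finite \<Rightarrow> real"
  assumes W: "is_channel W" and P: "is_distr P" and \<epsilon>: "0 < \<epsilon>"
  obtains L where "\<And>y. trunc_geo_mean W P L y \<le> geo_mean W P y + \<epsilon>"
proof
  have P0: "\<And>x. 0 \<le> P x"
    using P unfolding is_distr_def by auto
  define K where "K = (\<Sum>x\<in>UNIV. \<Sum>y\<in>UNIV. \<bar>ln (W x y)\<bar>)"
  define L where "L = K + (\<Sum>x\<in>UNIV. if 0 < P x then \<bar>ln \<epsilon>\<bar> / P x else 0)"
  have K: "\<bar>ln (W x y)\<bar> \<le> K" for x y
    unfolding K_def by (rule order_trans[OF member_le_sum member_le_sum[of x]]) (auto intro: sum_nonneg)
  have "0 \<le> (\<Sum>x\<in>UNIV. if 0 < P x then \<bar>ln \<epsilon>\<bar> / P x else 0)"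
    by (intro sum_nonneg) auto
  moreover have "0 \<le> K"
    using K[of undefined undefined] by linarith
  ultimately have L: "0 \<le> L" "K \<le> L" "(\<Sum>x\<in>UNIV. if 0 < P x then \<bar>ln \<epsilon>\<bar> / P x else 0) \<le> L"
    unfolding L_def by linarith+
  have exp_le: "exp (- P x * L) \<le> \<epsilon>" if "0 < P x" for x
  proof (rule exp_neg_mult_le[OF that \<epsilon>])
    have "\<bar>ln \<epsilon>\<bar> / P x \<le> (\<Sum>x\<in>UNIV. if 0 < P x then \<bar>ln \<epsilon>\<bar> / P x else 0)"
      using member_le_sum[of x UNIV "\<lambda>x. if 0 < P x then \<bar>ln \<epsilon>\<bar> / P x else 0"] that by auto
    then show "\<bar>ln \<epsilon>\<bar> / P x \<le> L"
      using L(3) by linarith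
  qed
  fix y
  show "trunc_geo_mean W P L y \<le> geo_mean W P y + \<epsilon>"
  proof (cases "\<forall>x. 0 < P x \<longrightarrow> 0 < W x y")
    case True
    moreover have "- L \<le> ln (W x y)" for x
      using K[of x y] L(2) by linarith
    ultimately have "trunc_geo_mean W P L y = geo_mean W P y"
      by (intro trunc_geo_mean_eq_geo_mean P0) auto
    then show ?thesis
      using \<epsilon> by simp
  next
    case False
    then obtain x0 where x0: "0 < P x0" "W x0 y = 0"
      using channel_nonneg[OF W, of _ y] by (auto simp: less_le)
    have "trunc_geo_mean W P L y \<le> exp (- P x0 * L)"
      by (rule trunc_geo_mean_le_exp[where P = P, OF W P0 L(1) x0(2)])
    then show ?thesis
      using exp_le[OF x0(1)] geo_mean_nonneg[of W P y] by linarith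
  qed
qed

lemma neg_log_rate_ge:
  fixes e S c :: real
  assumes n: "0 < n" and e: "e \<le> exp (real n * \<delta>) * S ^ n" and S: "0 < S" and c: "c \<le> - ln S - \<delta>"
  shows "ereal c \<le> neg_log_rate n e"
proof (cases "e \<le> 0")
  case False
  then have "ln e \<le> ln (exp (real n * \<delta>) * S ^ n)"
    using e S by simp
  also have "\<dots> = real n * (ln S + \<delta>)"
    using S by (simp add: ln_mult ln_realpow algebra_simps)
  finally have "- (ln S + \<delta>) \<le> - ln e / real n"
    using n by (simp add: field_simps)
  then show ?thesis
    unfolding neg_log_rate_def using False c by simp
qed (simp add: neg_log_rate_def)

lemma umlaut_at_margin:
  fixes W :: "'x::finite \<Rightarrow> 'y::finite \<Rightarrow> real"
  assumes "ereal c < umlaut_at W P"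
  obtains \<epsilon> \<delta> where "0 < \<epsilon>" and "0 < \<delta>" and "c < - ln (geo_mass W P + \<epsilon>) - \<delta>"
proof (cases "geo_mass W P = 0")
  case True
  show ?thesis
    by (rule that[of "exp (- (c + 2))" 1]) (simp_all add: True)
next
  case False
  then have Z: "0 < geo_mass W P"
    using geo_mass_nonneg[of W P] by simp
  define \<eta> where "\<eta> = (- ln (geo_mass W P) - c) / 4"
  have c: "c < - ln (geo_mass W P)"
    using assms False by (simp add: umlaut_at_def)
  then have "0 < \<eta>"
    unfolding \<eta>_def by simp
  moreover have "c < - ln (geo_mass W P) - \<eta> - \<eta>"
    using c unfolding \<eta>_def by (simp add: field_simps)
  moreover have "- ln (geo_mass W P + geo_mass W P * (exp \<eta> - 1)) = - ln (geo_mass W P) - \<eta>"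
    using Z by (simp add: algebra_simps ln_mult)
  ultimately show ?thesis
    using Z by (intro that[of "geo_mass W P * (exp \<eta> - 1)" \<eta>]) simp_all
qed

lemma eventually_le_neg_log_rate:
  fixes W :: "'x::finite \<Rightarrow> 'y::finite \<Rightarrow> real"
  assumes W: "is_channel W" and P: "is_distr P" and M: "2 \<le> M" and c: "ereal c < umlaut_at W P"
  shows "eventually (\<lambda>n. ereal c \<le> neg_log_rate n (eps_NS M (words n) (words n) (channel_pow n W)))
           sequentially"
proof -
  obtain \<epsilon> \<delta> where \<epsilon>: "0 < \<epsilon>" and \<delta>: "0 < \<delta>" and margin: "c < - ln (geo_mass W P + \<epsilon>) - \<delta>"
    using umlaut_at_margin[OF c] by blast
  define k where "k = real (card (UNIV :: 'y set))"
  have "0 < k"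
    unfolding k_def by simp
  obtain L where L: "\<And>y. trunc_geo_mean W P L y \<le> geo_mean W P y + \<epsilon> / k"
    using trunc_geo_mean_le[OF W P] \<epsilon> \<open>0 < k\<close> by (metis divide_pos_pos)
  define S where "S = (\<Sum>y\<in>UNIV. trunc_geo_mean W P L y)"
  have "0 < S"
    unfolding S_def trunc_geo_mean_def by (intro sum_pos) auto
  have "S \<le> (\<Sum>y\<in>UNIV. geo_mean W P y + \<epsilon> / k)"
    unfolding S_def by (intro sum_mono L)
  also have "\<dots> = geo_mass W P + \<epsilon>"
    using \<open>0 < k\<close> by (simp add: sum.distrib geo_mass_def k_def)
  finally have "ln S \<le> ln (geo_mass W P + \<epsilon>)"
    using \<open>0 < S\<close> by simp
  then have c: "c \<le> - ln S - \<delta>"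
    using margin by simp
  show ?thesis
    using eps_NS_channel_pow_le[OF W P M \<delta>, of L] eventually_gt_at_top[of 0]
    by eventually_elim (use \<open>0 < S\<close> c in \<open>auto simp: S_def intro: neg_log_rate_ge\<close>)
qed

lemma umlaut_info_le_liminf:
  fixes W :: "'x::finite \<Rightarrow> 'y::finite \<Rightarrow> real"
  assumes W: "is_channel W" and M: "2 \<le> M"
  shows "umlaut_info W \<le> liminf (\<lambda>n. neg_log_rate n (eps_NS M (words n) (words n) (channel_pow n W)))"
  unfolding umlaut_info_eq_SUP_umlaut_at[OF W]
proof (rule SUP_least, rule dense_le)
  fix P :: "'x \<Rightarrow> real" and c :: ereal
  assume "P \<in> {P. is_distr P}" and "c < umlaut_at W P"
  then show "c \<le> liminf (\<lambda>n. neg_log_rate n (eps_NS M (words n) (words n) (channel_pow n W)))"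
    using eventually_le_neg_log_rate[OF W _ M] by (cases c) (auto intro: Liminf_bounded)
qed

section \<open>Converse\<close>

lemma log_ratio_gt:
  fixes W :: "'x::finite \<Rightarrow> 'y::finite \<Rightarrow> real"
  assumes W: "is_channel W" and Q0: "\<And>y. 0 \<le> Q y" and supp: "\<And>x y. 0 < Q y \<Longrightarrow> 0 < W x y"
    and ys: "exp a * channel_pow n W xs ys < iid Q n ys"
  shows "a < (\<Sum>i<n. ln (Q (ys ! i) / W (xs ! i) (ys ! i)))"
proof -
  have "0 \<le> exp a * channel_pow n W xs ys"
    using channel_pow_nonneg[OF W] by simp
  then have "0 < iid Q n ys"
    using ys by linarith
  then have Qpos: "\<forall>i<n. 0 < Q (ys ! i)"
    by (simp add: iid_pos_iff[OF Q0])
  then have Wpos: "\<forall>i<n. 0 < W (xs ! i) (ys ! i)"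
    by (auto intro: supp)
  have "0 < channel_pow n W xs ys"
    unfolding channel_pow_def using Wpos by (auto intro: prod_pos)
  have ln_iid: "ln (iid Q n ys) = (\<Sum>i<n. ln (Q (ys ! i)))"
    unfolding iid_def using Qpos by (subst ln_prod) auto
  have ln_pow: "ln (channel_pow n W xs ys) = (\<Sum>i<n. ln (W (xs ! i) (ys ! i)))"
    unfolding channel_pow_def using Wpos by (subst ln_prod) auto
  have "ln (exp a * channel_pow n W xs ys) < ln (iid Q n ys)"
    using ys \<open>0 < channel_pow n W xs ys\<close> \<open>0 < iid Q n ys\<close> by (subst ln_less_cancel_iff) auto
  then have "a + ln (channel_pow n W xs ys) < ln (iid Q n ys)"
    using \<open>0 < channel_pow n W xs ys\<close> by (simp add: ln_mult)
  then show ?thesis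
    unfolding ln_iid ln_pow using Qpos Wpos by (simp add: ln_divide_pos sum_subtractf)
qed

lemma iid_escape_prob:
  fixes W :: "'x::finite \<Rightarrow> 'y::finite \<Rightarrow> real"
  assumes W: "is_channel W" and Q: "is_distr Q" and supp: "\<And>x y. 0 < Q y \<Longrightarrow> 0 < W x y"
    and D: "\<And>x. (\<Sum>y\<in>UNIV. Q y * ln (Q y / W x y)) \<le> u" and \<delta>: "0 < \<delta>" and n: "0 < n"
  defines "V \<equiv> (\<Sum>x\<in>UNIV. \<Sum>y\<in>UNIV. Q y * (ln (Q y / W x y) - (\<Sum>y'\<in>UNIV. Q y' * ln (Q y' / W x y')))\<^sup>2)"
  shows "(\<Sum>ys\<in>words n. if exp (real n * (u + \<delta>)) * channel_pow n W xs ys < iid Q n ys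
            then iid Q n ys else 0) \<le> V / (real n * \<delta>\<^sup>2)"
proof -
  have Q0: "\<And>y. 0 \<le> Q y" and Q1: "sum Q UNIV = 1"
    using Q unfolding is_distr_def by auto
  define h where "h x y = ln (Q y / W x y)" for x y
  define m where "m x = (\<Sum>y\<in>UNIV. Q y * h x y)" for x
  define d where "d i y = h (xs ! i) y - m (xs ! i)" for i y
  have centred: "(\<Sum>y\<in>UNIV. Q y * d i y) = 0" for i
    using Q1 by (simp add: d_def m_def right_diff_distrib sum_subtractf sum_distrib_right[symmetric])
  have var: "(\<Sum>y\<in>UNIV. Q y * (d i y)\<^sup>2) \<le> V" for i
    unfolding V_def d_def m_def h_def using Q0 by (intro member_le_sum) (auto intro!: sum_nonneg)
  have "(\<Sum>i<n. m (xs ! i)) \<le> (\<Sum>i<n. u)"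
    using D unfolding m_def h_def by (intro sum_mono)
  then have exceed: "real n * \<delta> \<le> (\<Sum>i<n. d i (ys ! i))"
    if "exp (real n * (u + \<delta>)) * channel_pow n W xs ys < iid Q n ys" for ys
    using log_ratio_gt[OF W Q0 supp that] unfolding d_def h_def
    by (simp add: sum_subtractf algebra_simps)
  have "(\<Sum>ys\<in>words n. if exp (real n * (u + \<delta>)) * channel_pow n W xs ys < iid Q n ys
          then iid Q n ys else 0)
      \<le> (\<Sum>ys\<in>words n. if real n * \<delta> \<le> (\<Sum>i<n. d i (ys ! i)) then iid Q n ys else 0)"
    using exceed iid_nonneg[OF Q0] by (intro sum_mono) auto
  also have "\<dots> \<le> V / (real n * \<delta>\<^sup>2)"
    by (rule iid_tail_bound[OF Q centred var n \<delta>])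
  finally show ?thesis .
qed

lemma eps_NS_ge_escape:
  fixes W :: "'a \<Rightarrow> 'b \<Rightarrow> real"
  assumes M: "2 \<le> M" and A: "finite A" "A \<noteq> {}" and B: "B \<noteq> {}"
    and W0: "\<And>x y. 0 \<le> W x y" and W1: "\<And>x. x \<in> A \<Longrightarrow> (\<Sum>y\<in>B. W x y) = 1"
    and Q0: "\<And>y. 0 \<le> Q y" and Q1: "sum Q B = 1"
    and escape: "\<And>x. x \<in> A \<Longrightarrow> (\<Sum>y\<in>B. if exp g * W x y < Q y then Q y else 0) \<le> (1 - 1 / real M) / 2"
  shows "exp (- g) * ((1 - 1 / real M) / 2) \<le> eps_NS M A B W"
proof (rule test_error_le_eps_NS[OF M A B W1])
  fix P T assume test: "NS_test M A B P T"
  define c where "c = (1 - 1 / real M) / 2"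
  have "(\<Sum>x\<in>A. P x * (\<Sum>y\<in>B. if exp g * W x y < Q y then Q y else 0)) \<le> (\<Sum>x\<in>A. P x * c)"
    using test escape unfolding NS_test_def c_def by (intro sum_mono mult_left_mono) auto
  also have "\<dots> = c"
    using test unfolding NS_test_def by (simp add: sum_distrib_right[symmetric])
  finally have "exp (- g) * c
      \<le> exp (- g) * (1 - 1 / real M - (\<Sum>x\<in>A. P x * (\<Sum>y\<in>B. if exp g * W x y < Q y then Q y else 0)))"
    unfolding c_def by (intro mult_left_mono) auto
  also have "\<dots> \<le> (\<Sum>x\<in>A. \<Sum>y\<in>B. W x y * T x y)"
    by (rule NS_test_error_ge[OF test W0 Q0 Q1])
  finally show "exp (- g) * ((1 - 1 / real M) / 2) \<le> (\<Sum>x\<in>A. \<Sum>y\<in>B. W x y * T x y)"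
    unfolding c_def .
qed

lemma eps_NS_channel_pow_ge:
  fixes W :: "'x::finite \<Rightarrow> 'y::finite \<Rightarrow> real"
  assumes W: "is_channel W" and M: "2 \<le> M" and Q: "is_distr Q"
    and supp: "\<And>x y. 0 < Q y \<Longrightarrow> 0 < W x y"
    and D: "\<And>x. (\<Sum>y\<in>UNIV. Q y * ln (Q y / W x y)) \<le> u" and \<delta>: "0 < \<delta>"
  shows "eventually (\<lambda>n. exp (- (real n * (u + \<delta>))) * ((1 - 1 / real M) / 2)
           \<le> eps_NS M (words n) (words n) (channel_pow n W)) sequentially"
proof -
  have Q0: "\<And>y. 0 \<le> Q y" and Q1: "sum Q UNIV = 1"
    using Q unfolding is_distr_def by auto
  define V where "V = (\<Sum>x\<in>UNIV. \<Sum>y\<in>UNIV. Q y * (ln (Q y / W x y) - (\<Sum>y'\<in>UNIV. Q y' * ln (Q y' / W x y')))\<^sup>2)"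
  have "eventually (\<lambda>n. V / (real n * \<delta>\<^sup>2) \<le> (1 - 1 / real M) / 2) sequentially"
    using M by (intro eventually_div_le \<delta>) (simp add: field_simps)
  then show ?thesis
    using eventually_gt_at_top[of 0]
  proof eventually_elim
    case (elim n)
    then have "(\<Sum>ys\<in>words n. if exp (real n * (u + \<delta>)) * channel_pow n W xs ys < iid Q n ys
        then iid Q n ys else 0) \<le> (1 - 1 / real M) / 2" for xs
      using iid_escape_prob[OF W Q supp D \<delta>, of n xs] unfolding V_def by linarith
    then show ?case
      by (intro eps_NS_ge_escape[OF M finite_words words_not_empty words_not_empty
          channel_pow_nonneg[OF W] channel_pow_sum[OF W] iid_nonneg[OF Q0] sum_iid[OF Q1]])
  qed
qed

lemma neg_log_rate_le:
  fixes e g c :: real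
  assumes n: "0 < n" and c: "0 < c" and e: "exp (- (real n * g)) * c \<le> e" and large: "- ln c \<le> real n * \<delta>"
  shows "neg_log_rate n e \<le> ereal (g + \<delta>)"
proof -
  have "0 < exp (- (real n * g)) * c"
    using c by simp
  then have "0 < e"
    using e by linarith
  have "ln (exp (- (real n * g)) * c) \<le> ln e"
    using e c \<open>0 < e\<close> by simp
  then have "- ln e \<le> real n * g - ln c"
    using c by (simp add: ln_mult)
  also have "\<dots> \<le> real n * (g + \<delta>)"
    using large by (simp add: algebra_simps)
  finally have "- ln e / real n \<le> g + \<delta>"
    using n by (subst pos_divide_le_eq) (simp_all add: mult.commute)
  then show ?thesis
    unfolding neg_log_rate_def using \<open>0 < e\<close> by simp
qed

lemma liminf_le_umlaut_info:
  fixes W :: "'x::finite \<Rightarrow> 'y::finite \<Rightarrow> real"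
  assumes W: "is_channel W" and M: "2 \<le> M"
  shows "liminf (\<lambda>n. neg_log_rate n (eps_NS M (words n) (words n) (channel_pow n W))) \<le> umlaut_info W"
proof (cases "umlaut_info W")
  case (real u)
  obtain Q where Q: "is_distr Q" and supp: "\<And>x y. 0 < Q y \<Longrightarrow> 0 < W x y"
    and D: "\<And>x. (\<Sum>y\<in>UNIV. Q y * ln (Q y / W x y)) \<le> u"
    using umlaut_saddle_point[OF W real] by blast
  define c where "c = (1 - 1 / real M) / 2"
  have "0 < c"
    unfolding c_def using M by (simp add: field_simps)
  show ?thesis
    unfolding real
  proof (rule ereal_le_epsilon2)
    fix \<epsilon> :: real assume "0 < \<epsilon>"
    obtain N :: nat where N: "- ln c < real N * (\<epsilon> / 2)"
      using reals_Archimedean3[of "\<epsilon> / 2"] \<open>0 < \<epsilon>\<close> by (meson half_gt_zero)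
    have "\<forall>\<^sub>F n in sequentially. exp (- (real n * (u + \<epsilon> / 2))) * c
        \<le> eps_NS M (words n) (words n) (channel_pow n W)"
      unfolding c_def by (rule eps_NS_channel_pow_ge[OF W M Q]) (use supp D \<open>0 < \<epsilon>\<close> in auto)
    then have "\<forall>\<^sub>F n in sequentially. neg_log_rate n (eps_NS M (words n) (words n) (channel_pow n W))
        \<le> ereal (u + \<epsilon>)"
      using eventually_gt_at_top[of 0] eventually_ge_at_top[of N]
    proof eventually_elim
      case (elim n)
      then have "real N * (\<epsilon> / 2) \<le> real n * (\<epsilon> / 2)"
        using \<open>0 < \<epsilon>\<close> by (intro mult_right_mono) auto
      then have "- ln c \<le> real n * (\<epsilon> / 2)"
        using N by linarith
      then have "neg_log_rate n (eps_NS M (words n) (words n) (channel_pow n W))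
          \<le> ereal (u + \<epsilon> / 2 + \<epsilon> / 2)"
        using elim \<open>0 < c\<close> by (intro neg_log_rate_le) simp_all
      then show ?case
        by (simp add: add.commute)
    qed
    then have "limsup (\<lambda>n. neg_log_rate n (eps_NS M (words n) (words n) (channel_pow n W))) \<le> ereal (u + \<epsilon>)"
      by (intro Limsup_bounded) simp
    then show "liminf (\<lambda>n. neg_log_rate n (eps_NS M (words n) (words n) (channel_pow n W))) \<le> ereal u + ereal \<epsilon>"
      using Liminf_le_Limsup[OF trivial_limit_sequentially] order_trans by fastforce
  qed
qed (use umlaut_info_not_MInf[OF W] in simp_all)

theorem mainTheorem2:
  fixes W :: "'x::finite \<Rightarrow> 'y::finite \<Rightarrow> real" and M :: nat
  assumes "is_channel W" and "M \<ge> 2"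
  shows "liminf (\<lambda>n. neg_log_rate n (eps_NS M (words n) (words n) (channel_pow n W)))
           = umlaut_info W"
  using liminf_le_umlaut_info[OF assms] umlaut_info_le_liminf[OF assms] by (rule antisym)

end
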